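(* In the setting of the context, if $\Phi\in\mathcal D(A)$, $\Phi^2\in\mathcal D(A)$ and $A\Phi\in\mathcal L^2_{uni}$, then the MAF $M[\Phi]$ is square integrable. Moreover, $\sup_{t\in[s,T]}|\Phi^{s,\eta}_t|\in L^2(\mathbb P^{s,\eta})$ for all $(s,\eta)\in[0,T]\times\Omega$, where $\Phi^{s,\eta}:=\Phi_s(\eta)+\int_s^{s\vee\cdot}(A\Phi)_rdV_r+M[\Phi]^{s,\eta}$.
   Context: Let $E$ be Polish, $\Omega=\mathbb D(\mathbb R_+,E)$, $X_t(\omega)=\omega(t)$, $\mathcal F=\sigma(X_r,r\ge0)$, $\mathcal F^o_t=\sigma(X_r,r\le t)$, $\mathcal F_t=\bigcap_{u>t}\mathcal F^o_u$, $\mathbb F^o=(\mathcal F^o_t)$, $\omega^t=\omega(\cdot\wedge t)$. $(\mathbb P^{s,\eta})_{(s,\eta)\in\mathbb R_+\times\Omega}$ is a family of probabilities on $(\Omega,\mathcal F)$ with $\mathbb P^{s,\eta}(\omega^s=\eta^s)=1$, $\eta\mapsto\mathbb P^{s,\eta}(F)$ $\mathcal F^o_s$-measurable, $(t,\omega)\mapsto\mathbb P^{t,\omega}(F)$ $\mathbb F^o$-progressive, and $\mathbb P^{s,\eta}(F|\mathcal F_t)(\omega)=\mathbb P^{s,\eta}(F|\mathcal F^o_t)(\omega)=\mathbb P^{t,\omega}(F)$ $\mathbb P^{s,\eta}$-a.s., $t\ge s$. $P_s[\phi](\eta)=\mathbb E^{s,\eta}[\phi]$; $\mathbb F^{s,\eta}$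 the $\mathbb P^{s,\eta}$-completion of $(\mathcal F_t)$. Fix $T>0$, $V:[0,T]\to\mathbb R_+$ continuous non-decreasing, extended constantly after $T$. $(\mathcal D(A),A)$: $\mathcal D(A)$ a linear space of real $\mathbb F^o$-progressive processes, $A$ linear into $\mathbb F^o$-progressive processes, with $\int_0^t|A\Phi_r(\omega)|dV_r<\infty$, $\mathbb E^{s,\eta}[\int_s^t|A\Phi_r|dV_r]<\infty$, $\mathbb E^{s,\eta}|\Phi_t|<\infty$ ($t\ge s$); each $\Phi\in\mathcal D(A)$ constant after $T$, $A\Phi=0$ after $T$; weak generator property: $P_s[\Phi_t](\eta)=\Phi_s(\eta)+\int_s^tP_s[A\Phi_r](\eta)dV_r$. A path-dependent MAF is a random field $(M_{t,u})_{0\le t\le u}$, $M_{t,u}$ $\mathcal F^o_u$-measurable, with for each $(s,\eta)$ a càdlàg $(\mathbb P^{s,\eta},\mathbb F^{s,\eta})$-martingale $M^{s,\eta}$ zero on $[0,s]$ (càdlàg version) such that $M_{t,u}=M^{s,\eta}_u-M^{s,\eta}_t$ $\mathbb P^{s,\eta}$-a.s., $s\le t\le u$; square integrable if each $M^{s,\eta}$ is. For $\Phi\in\mathcal D(A)$, $M[\Phi]_{t,u}(\omega)=\Phi_u(\omega)-\Phi_t(\omega)-\int_t^uA\Phi_r(\omega)dV_r$ is a MAF with càdlàg version $M[\Phi]^{s,\eta}$ (so $\Phi^{s,\eta}$ is a $\mathbb P^{s,\eta}$-version of $\Phi$ on $[s,T]$). $\mathcal L^2_{uni}$: $\mathbb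 F^o$-progressive $Y$ with $\mathbb E^{s,\eta}[\int_s^T|Y_r|^2dV_r]<\infty$ for all $(s,\eta)\in[0,T]\times\Omega$. *)

theory Defs
  imports "HOL-Probability.Probability"
begin

text \<open>Paths are functions on the real line; only t >= 0 matters, and by convention
  a path is constant (equal to its value at 0) on the negative half line.\<close>

definition cadlag_on_Rplus :: "(real \<Rightarrow> 'a::topological_space) \<Rightarrow> bool" where
  "cadlag_on_Rplus f \<longleftrightarrow>
     (\<forall>t\<ge>0. (f \<longlongrightarrow> f t) (at_right t)) \<and>
     (\<forall>t>0. \<exists>l. (f \<longlongrightarrow> l) (at_left t))"

definition Omega :: "(real \<Rightarrow> 'e::polish_space) set" where
  "Omega = {\<omega>. cadlag_on_Rplus \<omega> \<and> (\<forall>t<0. \<omega> t = \<omega> 0)}"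

definition Xc :: "real \<Rightarrow> (real \<Rightarrow> 'e) \<Rightarrow> 'e" where
  "Xc r \<omega> = \<omega> r"

definition Fall :: "(real \<Rightarrow> 'e::polish_space) measure" where
  "Fall = sigma Omega {Xc r -` B \<inter> Omega | r B. 0 \<le> r \<and> B \<in> sets borel}"

definition Fo :: "real \<Rightarrow> (real \<Rightarrow> 'e::polish_space) measure" where
  "Fo t = sigma Omega {Xc r -` B \<inter> Omega | r B. 0 \<le> r \<and> r \<le> t \<and> B \<in> sets borel}"

definition Ft :: "real \<Rightarrow> (real \<Rightarrow> 'e::polish_space) measure" where
  "Ft t = sigma Omega (\<Inter>u\<in>{t<..}. sets (Fo u))"

definition Fcompl :: "(real \<Rightarrow> 'e) measure \<Rightarrow> real \<Rightarrow> (real \<Rightarrow> 'e::polish_space) measure" where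
  "Fcompl Q t = sigma Omega
     {A. A \<subseteq> Omega \<and> (\<exists>B\<in>sets (Ft t). \<exists>N\<in>null_sets Q. (A - B) \<union> (B - A) \<subseteq> N)}"

definition progressive :: "(real \<Rightarrow> (real \<Rightarrow> 'e::polish_space) \<Rightarrow> real) \<Rightarrow> bool" where
  "progressive Y \<longleftrightarrow>
     (\<forall>t\<ge>0. (\<lambda>(r, \<omega>). Y r \<omega>) \<in> borel_measurable (restrict_space borel {0..t} \<Otimes>\<^sub>M Fo t))"

definition markov_family :: "(real \<Rightarrow> (real \<Rightarrow> 'e) \<Rightarrow> (real \<Rightarrow> 'e::polish_space) measure) \<Rightarrow> bool" where
  "markov_family P \<longleftrightarrow>
     (\<forall>s\<ge>0. \<forall>\<eta>\<in>Omega. prob_space (P s \<eta>) \<and> sets (P s \<eta>) = sets Fall) \<and>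
     (\<forall>s\<ge>0. \<forall>\<eta>\<in>Omega. measure (P s \<eta>) {\<omega>\<in>Omega. \<forall>r\<in>{0..s}. \<omega> r = \<eta> r} = 1) \<and>
     (\<forall>s\<ge>0. \<forall>F\<in>sets Fall. (\<lambda>\<eta>. measure (P s \<eta>) F) \<in> borel_measurable (Fo s)) \<and>
     (\<forall>F\<in>sets Fall. progressive (\<lambda>t \<omega>. measure (P t \<omega>) F)) \<and>
     (\<forall>s\<ge>0. \<forall>\<eta>\<in>Omega. \<forall>t\<ge>s. \<forall>F\<in>sets Fall.
        (AE \<omega> in P s \<eta>. real_cond_exp (P s \<eta>) (Ft t) (indicator F) \<omega> = measure (P t \<omega>) F) \<and>
        (AE \<omega> in P s \<eta>. real_cond_exp (P s \<eta>) (Fo t) (indicator F) \<omega> = measure (P t \<omega>) F))"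

definition integrator :: "real \<Rightarrow> (real \<Rightarrow> real) \<Rightarrow> bool" where
  "integrator T V \<longleftrightarrow> 0 < T \<and> mono V \<and> continuous_on UNIV V \<and>
     (\<forall>t\<ge>0. 0 \<le> V t) \<and> (\<forall>t\<ge>T. V t = V T)"

definition dVint :: "(real \<Rightarrow> real) \<Rightarrow> real \<Rightarrow> real \<Rightarrow> (real \<Rightarrow> real) \<Rightarrow> real" where
  "dVint V s t f = set_lebesgue_integral (interval_measure V) {s..t} f"

definition dVint_abs :: "(real \<Rightarrow> real) \<Rightarrow> real \<Rightarrow> real \<Rightarrow> (real \<Rightarrow> real) \<Rightarrow> ennreal" where
  "dVint_abs V s t f = set_nn_integral (interval_measure V) {s..t} (\<lambda>r. ennreal \<bar>f r\<bar>)"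

definition weak_generator ::
  "(real \<Rightarrow> (real \<Rightarrow> 'e) \<Rightarrow> (real \<Rightarrow> 'e::polish_space) measure) \<Rightarrow> real \<Rightarrow> (real \<Rightarrow> real)
   \<Rightarrow> (real \<Rightarrow> (real \<Rightarrow> 'e) \<Rightarrow> real) set
   \<Rightarrow> ((real \<Rightarrow> (real \<Rightarrow> 'e) \<Rightarrow> real) \<Rightarrow> (real \<Rightarrow> (real \<Rightarrow> 'e) \<Rightarrow> real)) \<Rightarrow> bool" where
  "weak_generator P T V D A \<longleftrightarrow>
     \<comment> \<open>D(A) is a linear space and A is linear\<close>
     (\<lambda>t \<omega>. 0) \<in> D \<and>
     (\<forall>\<Phi>\<in>D. \<forall>\<Psi>\<in>D. (\<lambda>t \<omega>. \<Phi> t \<omega> + \<Psi> t \<omega>) \<in> D \<and>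
         A (\<lambda>t \<omega>. \<Phi> t \<omega> + \<Psi> t \<omega>) = (\<lambda>t \<omega>. A \<Phi> t \<omega> + A \<Psi> t \<omega>)) \<and>
     (\<forall>\<Phi>\<in>D. \<forall>c::real. (\<lambda>t \<omega>. c * \<Phi> t \<omega>) \<in> D \<and>
         A (\<lambda>t \<omega>. c * \<Phi> t \<omega>) = (\<lambda>t \<omega>. c * A \<Phi> t \<omega>)) \<and>
     (\<forall>\<Phi>\<in>D.
        progressive \<Phi> \<and> progressive (A \<Phi>) \<and>
        (\<forall>\<omega>\<in>Omega. \<forall>t\<ge>0. dVint_abs V 0 t (\<lambda>r. A \<Phi> r \<omega>) < \<infinity>) \<and>
        (\<forall>s\<ge>0. \<forall>\<eta>\<in>Omega. \<forall>t\<ge>s.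
            (\<integral>\<^sup>+ \<omega>. dVint_abs V s t (\<lambda>r. A \<Phi> r \<omega>) \<partial>P s \<eta>) < \<infinity> \<and>
            integrable (P s \<eta>) (\<Phi> t)) \<and>
        (\<forall>t\<ge>T. \<forall>\<omega>\<in>Omega. \<Phi> t \<omega> = \<Phi> T \<omega>) \<and>
        (\<forall>t>T. \<forall>\<omega>\<in>Omega. A \<Phi> t \<omega> = 0) \<and>
        (\<forall>s\<ge>0. \<forall>\<eta>\<in>Omega. \<forall>t\<ge>s.
            (\<integral>\<omega>. \<Phi> t \<omega> \<partial>P s \<eta>) =
              \<Phi> s \<eta> + dVint V s t (\<lambda>r. \<integral>\<omega>. A \<Phi> r \<omega> \<partial>P s \<eta>)))"

definition cadlag_martingale ::
  "'a measure \<Rightarrow> (real \<Rightarrow> 'a measure) \<Rightarrow> (real \<Rightarrow> 'a \<Rightarrow> real) \<Rightarrow> bool" where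
  "cadlag_martingale Q G M \<longleftrightarrow>
     (\<forall>\<omega>\<in>space Q. cadlag_on_Rplus (\<lambda>t. M t \<omega>)) \<and>
     (\<forall>t\<ge>0. M t \<in> borel_measurable (G t) \<and> integrable Q (M t)) \<and>
     (\<forall>t u A. 0 \<le> t \<and> t \<le> u \<and> A \<in> sets (G t) \<longrightarrow>
        set_lebesgue_integral Q A (M u) = set_lebesgue_integral Q A (M t))"

definition square_integrable_proc :: "'a measure \<Rightarrow> (real \<Rightarrow> 'a \<Rightarrow> real) \<Rightarrow> bool" where
  "square_integrable_proc Q M \<longleftrightarrow>
     (\<forall>t\<ge>0. integrable Q (\<lambda>\<omega>. (M t \<omega>)\<^sup>2)) \<and>
     (\<exists>C. \<forall>t\<ge>0. (\<integral>\<omega>. (M t \<omega>)\<^sup>2 \<partial>Q) \<le> C)"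

definition MAF_version ::
  "(real \<Rightarrow> (real \<Rightarrow> 'e) \<Rightarrow> (real \<Rightarrow> 'e::polish_space) measure) \<Rightarrow> real \<Rightarrow> (real \<Rightarrow> 'e)
   \<Rightarrow> (real \<Rightarrow> real \<Rightarrow> (real \<Rightarrow> 'e) \<Rightarrow> real) \<Rightarrow> (real \<Rightarrow> (real \<Rightarrow> 'e) \<Rightarrow> real) \<Rightarrow> bool" where
  "MAF_version P s \<eta> M Ms \<longleftrightarrow>
     cadlag_martingale (completion (P s \<eta>)) (Fcompl (P s \<eta>)) Ms \<and>
     (\<forall>t\<in>{0..s}. \<forall>\<omega>\<in>Omega. Ms t \<omega> = 0) \<and>
     (\<forall>t u. s \<le> t \<and> t \<le> u \<longrightarrow> (AE \<omega> in P s \<eta>. M t u \<omega> = Ms u \<omega> - Ms t \<omega>))"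

definition is_MAF ::
  "(real \<Rightarrow> (real \<Rightarrow> 'e) \<Rightarrow> (real \<Rightarrow> 'e::polish_space) measure)
   \<Rightarrow> (real \<Rightarrow> real \<Rightarrow> (real \<Rightarrow> 'e) \<Rightarrow> real) \<Rightarrow> bool" where
  "is_MAF P M \<longleftrightarrow>
     (\<forall>t u. 0 \<le> t \<and> t \<le> u \<longrightarrow> M t u \<in> borel_measurable (Fo u)) \<and>
     (\<forall>s\<ge>0. \<forall>\<eta>\<in>Omega. \<exists>Ms. MAF_version P s \<eta> M Ms)"

definition square_integrable_MAF ::
  "(real \<Rightarrow> (real \<Rightarrow> 'e) \<Rightarrow> (real \<Rightarrow> 'e::polish_space) measure)
   \<Rightarrow> (real \<Rightarrow> real \<Rightarrow> (real \<Rightarrow> 'e) \<Rightarrow> real) \<Rightarrow> bool" where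
  "square_integrable_MAF P M \<longleftrightarrow> is_MAF P M \<and>
     (\<forall>s\<ge>0. \<forall>\<eta>\<in>Omega. \<forall>Ms. MAF_version P s \<eta> M Ms \<longrightarrow>
        square_integrable_proc (completion (P s \<eta>)) Ms)"

definition MPhi :: "(real \<Rightarrow> real) \<Rightarrow> (real \<Rightarrow> (real \<Rightarrow> 'e) \<Rightarrow> real) \<Rightarrow> (real \<Rightarrow> (real \<Rightarrow> 'e) \<Rightarrow> real)
   \<Rightarrow> real \<Rightarrow> real \<Rightarrow> (real \<Rightarrow> 'e) \<Rightarrow> real" where
  "MPhi V \<Phi> A\<Phi> t u \<omega> = \<Phi> u \<omega> - \<Phi> t \<omega> - dVint V t u (\<lambda>r. A\<Phi> r \<omega>)"

definition L2_uni ::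
  "(real \<Rightarrow> (real \<Rightarrow> 'e) \<Rightarrow> (real \<Rightarrow> 'e::polish_space) measure) \<Rightarrow> real \<Rightarrow> (real \<Rightarrow> real)
   \<Rightarrow> (real \<Rightarrow> (real \<Rightarrow> 'e) \<Rightarrow> real) set" where
  "L2_uni P T V = {Y. progressive Y \<and>
     (\<forall>s\<in>{0..T}. \<forall>\<eta>\<in>Omega.
        (\<integral>\<^sup>+ \<omega>. set_nn_integral (interval_measure V) {s..T} (\<lambda>r. ennreal ((Y r \<omega>)\<^sup>2)) \<partial>P s \<eta>) < \<infinity>)}"

end

theory Submission
  imports Defs
begin

text \<open>
  Fix \<open>s \<le> T\<close>, \<open>\<eta>\<close> and a cadlag version \<open>M\<close> of \<open>M[\<Phi>]\<close> under \<open>P s \<eta>\<close>. Almost surely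
  \<open>M t = \<Phi> t - \<Phi> s - \<integral>\<^sub>s\<^sup>t A\<Phi> dV\<close> for \<open>t \<ge> s\<close>, and every term is square integrable:
  \<open>\<Phi> t\<close> because \<open>\<Phi>\<^sup>2 \<in> D\<close>, and the drift because it is bounded by
  \<open>J = \<integral>\<^sub>s\<^sup>T \<bar>A\<Phi>\<bar> dV\<close>, where \<open>J\<^sup>2 \<le> (V T - V s) \<integral>\<^sub>s\<^sup>T (A\<Phi>)\<^sup>2 dV\<close> by Cauchy-Schwarz and
  \<open>A\<Phi> \<in> L2_uni\<close>. Doob's \<open>L\<^sup>2\<close> maximal inequality, proved for finitely many times and carried
  over to \<open>[s, T]\<close> through the rational times by right continuity, puts the supremum \<open>S\<close> of
  \<open>\<bar>M\<bar>\<close> over \<open>[s, T]\<close> in \<open>L\<^sup>2\<close>. Since \<open>M\<close> vanishes before \<open>s\<close> and is constant after \<open>T\<close>,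
  it is bounded in \<open>L\<^sup>2\<close>; and \<open>\<bar>\<Phi>\<^sup>s\<^sup>,\<^sup>\<eta>\<bar> \<le> \<bar>\<Phi> s \<eta>\<bar> + J + S\<close> on \<open>[s, T]\<close>.
\<close>

section \<open>Doob's $L^2$ maximal inequality\<close>

lemma nn_integral_indicator_abs_le_martingale:
  fixes X Y :: "'a \<Rightarrow> real"
  assumes sub: "sets G \<subseteq> sets M" "space G = space M"
    and X: "X \<in> borel_measurable G" "integrable M X" and Y: "integrable M Y"
    and mart: "\<And>B. B \<in> sets G \<Longrightarrow> (\<integral>\<omega>. indicator B \<omega> * Y \<omega> \<partial>M) = (\<integral>\<omega>. indicator B \<omega> * X \<omega> \<partial>M)"
    and A: "A \<in> sets G"
  shows "(\<integral>\<^sup>+\<omega>. ennreal (indicator A \<omega> * \<bar>X \<omega>\<bar>) \<partial>M) \<le> (\<integral>\<^sup>+\<omega>. ennreal (indicator A \<omega> * \<bar>Y \<omega>\<bar>) \<partial>M)"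
proof -
  define Ap where "Ap = A \<inter> {\<omega>\<in>space G. 0 \<le> X \<omega>}"
  define An where "An = A \<inter> {\<omega>\<in>space G. X \<omega> < 0}"
  have [measurable]: "X \<in> borel_measurable G" "A \<in> sets G" using X(1) A .
  have G: "Ap \<in> sets G" "An \<in> sets G"
    unfolding Ap_def An_def by measurable measurable
  then have sets_M: "Ap \<in> sets M" "An \<in> sets M" "A \<in> sets M" using A sub by auto
  have int_ind: "integrable M (\<lambda>\<omega>. indicator B \<omega> * f \<omega>)" if "B \<in> sets M" "integrable M f" for B and f :: "'a \<Rightarrow> real"
    using integrable_real_mult_indicator[OF that] by (simp add: mult.commute)
  note int_pm = int_ind[OF sets_M(1)] int_ind[OF sets_M(2)]
  have "(\<integral>\<omega>. indicator A \<omega> * \<bar>X \<omega>\<bar> \<partial>M) = (\<integral>\<omega>. indicator Ap \<omega> * X \<omega> - indicator An \<omega> * X \<omega> \<partial>M)"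
    by (rule Bochner_Integration.integral_cong) (auto simp: Ap_def An_def indicator_def sub)
  also have "\<dots> = (\<integral>\<omega>. indicator Ap \<omega> * X \<omega> \<partial>M) - (\<integral>\<omega>. indicator An \<omega> * X \<omega> \<partial>M)"
    by (rule Bochner_Integration.integral_diff[OF int_pm[OF X(2)]])
  also have "\<dots> = (\<integral>\<omega>. indicator Ap \<omega> * Y \<omega> \<partial>M) - (\<integral>\<omega>. indicator An \<omega> * Y \<omega> \<partial>M)"
    using mart[OF G(1)] mart[OF G(2)] by simp
  also have "\<dots> = (\<integral>\<omega>. indicator Ap \<omega> * Y \<omega> - indicator An \<omega> * Y \<omega> \<partial>M)"
    by (rule Bochner_Integration.integral_diff[symmetric, OF int_pm[OF Y]])
  also have "\<dots> \<le> (\<integral>\<omega>. indicator A \<omega> * \<bar>Y \<omega>\<bar> \<partial>M)"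
    by (rule integral_mono[OF Bochner_Integration.integrable_diff[OF int_pm[OF Y]]
          int_ind[OF sets_M(3) integrable_abs[OF Y]]])
       (auto simp: Ap_def An_def indicator_def)
  finally show ?thesis
    using int_ind[OF sets_M(3) integrable_abs[OF X(2)]] int_ind[OF sets_M(3) integrable_abs[OF Y]]
    by (subst (1 2) nn_integral_eq_integral) auto
qed

lemma Max_ge_iff_first_index:
  fixes f :: "'i::linorder \<Rightarrow> real"
  assumes F: "finite F" "F \<noteq> {}"
  shows "l \<le> Max (f ` F) \<longleftrightarrow> (\<exists>t\<in>F. l \<le> f t \<and> (\<forall>u\<in>F. u < t \<longrightarrow> f u < l))"
proof
  assume "l \<le> Max (f ` F)"
  then have ne: "{t\<in>F. l \<le> f t} \<noteq> {}" using F by (auto simp: Max_ge_iff)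
  define t0 where "t0 = Min {t\<in>F. l \<le> f t}"
  have "t0 \<in> F" "l \<le> f t0" using Min_in[OF _ ne] F(1) by (auto simp: t0_def)
  moreover have "f u < l" if "u \<in> F" "u < t0" for u
  proof (rule ccontr)
    assume "\<not> f u < l"
    then have "t0 \<le> u" unfolding t0_def using that F(1) by (intro Min_le) auto
    then show False using that by simp
  qed
  ultimately show "\<exists>t\<in>F. l \<le> f t \<and> (\<forall>u\<in>F. u < t \<longrightarrow> f u < l)" by blast
qed (use F in \<open>auto simp: Max_ge_iff\<close>)

lemma doob_maximal_inequality_finite:
  fixes X :: "real \<Rightarrow> 'a \<Rightarrow> real" and G :: "real \<Rightarrow> 'a measure"
  assumes F: "finite F" "F \<noteq> {}"
    and sub: "\<And>t. t \<in> F \<Longrightarrow> sets (G t) \<subseteq> sets M" "\<And>t. t \<in> F \<Longrightarrow> space (G t) = space M"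
    and mono: "\<And>t u. t \<in> F \<Longrightarrow> u \<in> F \<Longrightarrow> t \<le> u \<Longrightarrow> sets (G t) \<subseteq> sets (G u)"
    and meas: "\<And>t. t \<in> F \<Longrightarrow> X t \<in> borel_measurable (G t)"
    and int: "\<And>t. t \<in> F \<Longrightarrow> integrable M (X t)"
    and mart: "\<And>t B. t \<in> F \<Longrightarrow> B \<in> sets (G t) \<Longrightarrow>
        (\<integral>\<omega>. indicator B \<omega> * X (Max F) \<omega> \<partial>M) = (\<integral>\<omega>. indicator B \<omega> * X t \<omega> \<partial>M)"
    and l: "0 < l"
  defines "S \<equiv> {\<omega>\<in>space M. l \<le> Max ((\<lambda>t. \<bar>X t \<omega>\<bar>) ` F)}"
  shows "ennreal l * emeasure M S \<le> (\<integral>\<^sup>+\<omega>. ennreal (indicator S \<omega> * \<bar>X (Max F) \<omega>\<bar>) \<partial>M)"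
proof -
  define m where "m = Max F"
  have mF: "m \<in> F" using F by (simp add: m_def)
  have XM[measurable]: "X t \<in> borel_measurable M" if "t \<in> F" for t
    using borel_measurable_subalgebra[OF sub[OF that] meas[OF that]] .
  \<comment> \<open>\<open>B t\<close>: the level \<open>l\<close> is first reached at time \<open>t\<close>\<close>
  define B where "B t = {\<omega>\<in>space M. l \<le> \<bar>X t \<omega>\<bar> \<and> (\<forall>u\<in>F. u < t \<longrightarrow> \<bar>X u \<omega>\<bar> < l)}" for t
  have BG: "B t \<in> sets (G t)" if t: "t \<in> F" for t
  proof -
    have [measurable]: "u \<in> F \<Longrightarrow> u \<le> t \<Longrightarrow> X u \<in> borel_measurable (G t)" for u
      using mono[OF _ t] sub[OF t] sub meas
      by (intro borel_measurable_subalgebra[of "G u" "G t"]) auto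
    have "B t = {\<omega>\<in>space (G t). l \<le> \<bar>X t \<omega>\<bar> \<and> (\<forall>u\<in>F. u < t \<longrightarrow> \<bar>X u \<omega>\<bar> < l)}"
      using sub(2)[OF t] by (simp add: B_def)
    also have "\<dots> \<in> sets (G t)" using F(1) t by measurable
    finally show ?thesis .
  qed
  have BM: "B t \<in> sets M" if "t \<in> F" for t using BG[OF that] sub(1)[OF that] by auto
  have S_eq: "S = (\<Union>t\<in>F. B t)"
    by (auto simp: S_def B_def Max_ge_iff_first_index[OF F])
  have disj: "disjoint_family_on B F"
    unfolding disjoint_family_on_def
  proof (intro ballI impI)
    fix t u assume "t \<in> F" "u \<in> F" "t \<noteq> u"
    then show "B t \<inter> B u = {}" by (cases "t < u") (auto simp: B_def)
  qed
  have B_bound: "ennreal l * emeasure M (B t) \<le> (\<integral>\<^sup>+\<omega>. ennreal (indicator (B t) \<omega> * \<bar>X m \<omega>\<bar>) \<partial>M)"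
    if t: "t \<in> F" for t
  proof -
    have "ennreal l * emeasure M (B t) = (\<integral>\<^sup>+\<omega>. ennreal l * indicator (B t) \<omega> \<partial>M)"
      using BM[OF t] by (simp add: nn_integral_cmult_indicator)
    also have "\<dots> \<le> (\<integral>\<^sup>+\<omega>. ennreal (indicator (B t) \<omega> * \<bar>X t \<omega>\<bar>) \<partial>M)"
      by (intro nn_integral_mono) (auto simp: B_def indicator_def)
    also have "\<dots> \<le> (\<integral>\<^sup>+\<omega>. ennreal (indicator (B t) \<omega> * \<bar>X m \<omega>\<bar>) \<partial>M)"
    proof (rule nn_integral_indicator_abs_le_martingale[OF sub[OF t] meas[OF t] int[OF t] int[OF mF]])
      show "(\<integral>\<omega>. indicator A \<omega> * X m \<omega> \<partial>M) = (\<integral>\<omega>. indicator A \<omega> * X t \<omega> \<partial>M)"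
        if "A \<in> sets (G t)" for A
        using mart[OF t that] by (simp add: m_def)
    qed (rule BG[OF t])
    finally show ?thesis .
  qed
  have "emeasure M S = (\<Sum>t\<in>F. emeasure M (B t))"
    unfolding S_eq using BM by (intro sum_emeasure[symmetric] disj F(1)) auto
  then have "ennreal l * emeasure M S = (\<Sum>t\<in>F. ennreal l * emeasure M (B t))"
    by (simp add: sum_distrib_left)
  also have "\<dots> \<le> (\<Sum>t\<in>F. \<integral>\<^sup>+\<omega>. ennreal (indicator (B t) \<omega> * \<bar>X m \<omega>\<bar>) \<partial>M)"
    by (intro sum_mono B_bound)
  also have "\<dots> = (\<integral>\<^sup>+\<omega>. (\<Sum>t\<in>F. ennreal (indicator (B t) \<omega> * \<bar>X m \<omega>\<bar>)) \<partial>M)"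
  proof (rule nn_integral_sum[symmetric])
    fix t assume "t \<in> F"
    have [measurable]: "B t \<in> sets M" "X m \<in> borel_measurable M"
      using BM[OF \<open>t \<in> F\<close>] XM[OF mF] .
    show "(\<lambda>\<omega>. ennreal (indicator (B t) \<omega> * \<bar>X m \<omega>\<bar>)) \<in> borel_measurable M" by measurable
  qed
  also have "\<dots> = (\<integral>\<^sup>+\<omega>. ennreal (indicator S \<omega> * \<bar>X m \<omega>\<bar>) \<partial>M)"
    unfolding S_eq indicator_UN_disjoint[OF F(1) disj]
    by (intro nn_integral_cong) (simp add: sum_ennreal sum_distrib_right)
  finally show ?thesis by (simp add: m_def)
qed

lemma nn_integral_power2_le_of_tail_bound:
  fixes Y Z :: "'a \<Rightarrow> real"
  assumes M: "sigma_finite_measure M"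
    and Y[measurable]: "Y \<in> borel_measurable M" and Y_nonneg: "\<And>\<omega>. 0 \<le> Y \<omega>"
    and Z[measurable]: "Z \<in> borel_measurable M"
    and tail: "\<And>x. 0 < x \<Longrightarrow> ennreal x * emeasure M {\<omega>\<in>space M. x \<le> Y \<omega>}
        \<le> (\<integral>\<^sup>+\<omega>. ennreal (indicator {\<omega>\<in>space M. x \<le> Y \<omega>} \<omega> * \<bar>Z \<omega>\<bar>) \<partial>M)"
  shows "(\<integral>\<^sup>+\<omega>. ennreal ((Y \<omega>)\<^sup>2) \<partial>M) \<le> (\<integral>\<^sup>+\<omega>. ennreal (2 * \<bar>Z \<omega>\<bar> * Y \<omega>) \<partial>M)"
proof -
  interpret M: sigma_finite_measure M by (rule M)
  interpret M_lborel: pair_sigma_finite M lborel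
    by (simp add: pair_sigma_finite_def M.sigma_finite_measure_axioms lborel.sigma_finite_measure_axioms)
  have [measurable]: "(\<lambda>(\<omega>, x). indicator {0..Y \<omega>} x :: ennreal) \<in> borel_measurable (M \<Otimes>\<^sub>M lborel)"
    unfolding indicator_def atLeastAtMost_iff by measurable
  have layer_cake: "ennreal ((Y \<omega>)\<^sup>2) = (\<integral>\<^sup>+x. ennreal (2 * x) * indicator {0..Y \<omega>} x \<partial>lborel)" for \<omega>
  proof -
    have "(\<integral>\<^sup>+x. ennreal (2 * x) * indicator {0..Y \<omega>} x \<partial>lborel) = ennreal ((Y \<omega>)\<^sup>2 - 0\<^sup>2)"
      by (rule nn_integral_FTC_Icc[where F="\<lambda>x. x\<^sup>2"]) (auto intro!: derivative_eq_intros simp: Y_nonneg)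
    then show ?thesis by simp
  qed
  have "(\<integral>\<^sup>+\<omega>. ennreal ((Y \<omega>)\<^sup>2) \<partial>M) = (\<integral>\<^sup>+x. \<integral>\<^sup>+\<omega>. ennreal (2 * x) * indicator {0..Y \<omega>} x \<partial>M \<partial>lborel)"
    unfolding layer_cake by (rule M_lborel.Fubini'[symmetric]) measurable
  also have "\<dots> \<le> (\<integral>\<^sup>+x. \<integral>\<^sup>+\<omega>. ennreal (2 * \<bar>Z \<omega>\<bar>) * indicator {0..Y \<omega>} x \<partial>M \<partial>lborel)"
  proof (rule nn_integral_mono)
    fix x :: real
    define S where "S = {\<omega>\<in>space M. x \<le> Y \<omega>}"
    have [measurable]: "S \<in> sets M" unfolding S_def by measurable
    show "(\<integral>\<^sup>+\<omega>. ennreal (2 * x) * indicator {0..Y \<omega>} x \<partial>M)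
        \<le> (\<integral>\<^sup>+\<omega>. ennreal (2 * \<bar>Z \<omega>\<bar>) * indicator {0..Y \<omega>} x \<partial>M)"
    proof (cases "0 < x")
      case True
      have "(\<integral>\<^sup>+\<omega>. ennreal (2 * x) * indicator {0..Y \<omega>} x \<partial>M) = (\<integral>\<^sup>+\<omega>. ennreal (2 * x) * indicator S \<omega> \<partial>M)"
        using True by (intro nn_integral_cong) (auto simp: S_def indicator_def)
      also have "\<dots> = ennreal (2 * x) * emeasure M S"
        by (rule nn_integral_cmult_indicator) simp
      also have "\<dots> = 2 * (ennreal x * emeasure M S)"
        using True by (simp add: ennreal_mult mult.assoc)
      also have "\<dots> \<le> 2 * (\<integral>\<^sup>+\<omega>. ennreal (indicator S \<omega> * \<bar>Z \<omega>\<bar>) \<partial>M)"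
        using tail[OF True] by (simp add: S_def mult_left_mono)
      also have "\<dots> = (\<integral>\<^sup>+\<omega>. ennreal (2 * \<bar>Z \<omega>\<bar>) * indicator {0..Y \<omega>} x \<partial>M)"
        using True by (subst nn_integral_cmult[symmetric])
          (auto intro!: nn_integral_cong simp: S_def indicator_def ennreal_mult)
      finally show ?thesis .
    qed (simp add: ennreal_neg)
  qed
  also have "\<dots> = (\<integral>\<^sup>+\<omega>. \<integral>\<^sup>+x. ennreal (2 * \<bar>Z \<omega>\<bar>) * indicator {0..Y \<omega>} x \<partial>lborel \<partial>M)"
    by (rule M_lborel.Fubini') measurable
  also have "\<dots> = (\<integral>\<^sup>+\<omega>. ennreal (2 * \<bar>Z \<omega>\<bar> * Y \<omega>) \<partial>M)"
    by (intro nn_integral_cong) (simp add: nn_integral_cmult_indicator Y_nonneg ennreal_mult)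
  finally show ?thesis .
qed

lemma nn_integral_power2_le_4_of_tail_bound:
  fixes Y Z :: "'a \<Rightarrow> real"
  assumes M: "sigma_finite_measure M"
    and Y: "Y \<in> borel_measurable M" "\<And>\<omega>. 0 \<le> Y \<omega>" and Z: "Z \<in> borel_measurable M"
    and tail: "\<And>x. 0 < x \<Longrightarrow> ennreal x * emeasure M {\<omega>\<in>space M. x \<le> Y \<omega>}
        \<le> (\<integral>\<^sup>+\<omega>. ennreal (indicator {\<omega>\<in>space M. x \<le> Y \<omega>} \<omega> * \<bar>Z \<omega>\<bar>) \<partial>M)"
    and int_Y2: "integrable M (\<lambda>\<omega>. (Y \<omega>)\<^sup>2)" and int_Z2: "integrable M (\<lambda>\<omega>. (Z \<omega>)\<^sup>2)"
  shows "(\<integral>\<^sup>+\<omega>. ennreal ((Y \<omega>)\<^sup>2) \<partial>M) \<le> 4 * (\<integral>\<^sup>+\<omega>. ennreal ((Z \<omega>)\<^sup>2) \<partial>M)"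
proof -
  have am_gm: "2 * \<bar>z\<bar> * y \<le> 2 * z\<^sup>2 + y\<^sup>2 / 2" for y z :: real
    using zero_le_power2[of "y - 2 * \<bar>z\<bar>"] by (simp add: power2_eq_square algebra_simps)
  have eY: "(\<integral>\<^sup>+\<omega>. ennreal ((Y \<omega>)\<^sup>2) \<partial>M) = ennreal (\<integral>\<omega>. (Y \<omega>)\<^sup>2 \<partial>M)"
    and eZ: "(\<integral>\<^sup>+\<omega>. ennreal ((Z \<omega>)\<^sup>2) \<partial>M) = ennreal (\<integral>\<omega>. (Z \<omega>)\<^sup>2 \<partial>M)"
    using int_Y2 int_Z2 by (auto intro!: nn_integral_eq_integral)
  have "ennreal (\<integral>\<omega>. (Y \<omega>)\<^sup>2 \<partial>M) \<le> (\<integral>\<^sup>+\<omega>. ennreal (2 * \<bar>Z \<omega>\<bar> * Y \<omega>) \<partial>M)"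
    unfolding eY[symmetric] by (rule nn_integral_power2_le_of_tail_bound[OF M Y Z]) (rule tail)
  also have "\<dots> \<le> (\<integral>\<^sup>+\<omega>. ennreal (2 * (Z \<omega>)\<^sup>2 + (Y \<omega>)\<^sup>2 / 2) \<partial>M)"
    by (intro nn_integral_mono ennreal_leI am_gm)
  also have "\<dots> = ennreal (2 * (\<integral>\<omega>. (Z \<omega>)\<^sup>2 \<partial>M) + (\<integral>\<omega>. (Y \<omega>)\<^sup>2 \<partial>M) / 2)"
    using int_Y2 int_Z2 by (subst nn_integral_eq_integral) auto
  finally have "ennreal (\<integral>\<omega>. (Y \<omega>)\<^sup>2 \<partial>M)
      \<le> ennreal (2 * (\<integral>\<omega>. (Z \<omega>)\<^sup>2 \<partial>M) + (\<integral>\<omega>. (Y \<omega>)\<^sup>2 \<partial>M) / 2)" .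
  then have "(\<integral>\<omega>. (Y \<omega>)\<^sup>2 \<partial>M) \<le> 4 * (\<integral>\<omega>. (Z \<omega>)\<^sup>2 \<partial>M)"
    by (subst (asm) ennreal_le_iff) (auto intro!: add_nonneg_nonneg integral_nonneg_AE)
  then have "ennreal (\<integral>\<omega>. (Y \<omega>)\<^sup>2 \<partial>M) \<le> ennreal (4 * (\<integral>\<omega>. (Z \<omega>)\<^sup>2 \<partial>M))"
    by (rule ennreal_leI)
  also have "\<dots> = 4 * ennreal (\<integral>\<omega>. (Z \<omega>)\<^sup>2 \<partial>M)"
    by (simp add: ennreal_mult integral_nonneg_AE)
  finally show ?thesis unfolding eY eZ .
qed

lemma doob_L2_inequality_finite:
  fixes X :: "real \<Rightarrow> 'a \<Rightarrow> real" and G :: "real \<Rightarrow> 'a measure"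
  assumes M: "sigma_finite_measure M"
    and F: "finite F" "F \<noteq> {}"
    and sub: "\<And>t. t \<in> F \<Longrightarrow> sets (G t) \<subseteq> sets M" "\<And>t. t \<in> F \<Longrightarrow> space (G t) = space M"
    and mono: "\<And>t u. t \<in> F \<Longrightarrow> u \<in> F \<Longrightarrow> t \<le> u \<Longrightarrow> sets (G t) \<subseteq> sets (G u)"
    and meas: "\<And>t. t \<in> F \<Longrightarrow> X t \<in> borel_measurable (G t)"
    and int: "\<And>t. t \<in> F \<Longrightarrow> integrable M (X t)"
    and int2: "\<And>t. t \<in> F \<Longrightarrow> integrable M (\<lambda>\<omega>. (X t \<omega>)\<^sup>2)"
    and mart: "\<And>t B. t \<in> F \<Longrightarrow> B \<in> sets (G t) \<Longrightarrow>
        (\<integral>\<omega>. indicator B \<omega> * X (Max F) \<omega> \<partial>M) = (\<integral>\<omega>. indicator B \<omega> * X t \<omega> \<partial>M)"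
  shows "(\<integral>\<^sup>+\<omega>. ennreal ((Max ((\<lambda>t. \<bar>X t \<omega>\<bar>) ` F))\<^sup>2) \<partial>M)
    \<le> 4 * (\<integral>\<^sup>+\<omega>. ennreal ((X (Max F) \<omega>)\<^sup>2) \<partial>M)"
proof (rule nn_integral_power2_le_4_of_tail_bound[OF M])
  have XM[measurable]: "X t \<in> borel_measurable M" if "t \<in> F" for t
    using borel_measurable_subalgebra[OF sub[OF that] meas[OF that]] .
  show "(\<lambda>\<omega>. Max ((\<lambda>t. \<bar>X t \<omega>\<bar>) ` F)) \<in> borel_measurable M"
    using F(1) by measurable
  show "X (Max F) \<in> borel_measurable M" using F by (intro XM) simp
  show "0 \<le> Max ((\<lambda>t. \<bar>X t \<omega>\<bar>) ` F)" for \<omega>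
    using F by (simp add: Max_ge_iff ex_in_conv)
  show "integrable M (\<lambda>\<omega>. (X (Max F) \<omega>)\<^sup>2)" using F by (simp add: int2)
  show "integrable M (\<lambda>\<omega>. (Max ((\<lambda>t. \<bar>X t \<omega>\<bar>) ` F))\<^sup>2)"
  proof (rule Bochner_Integration.integrable_bound)
    show "integrable M (\<lambda>\<omega>. \<Sum>t\<in>F. (X t \<omega>)\<^sup>2)" using int2 by (rule Bochner_Integration.integrable_sum)
    show "AE \<omega> in M. norm ((Max ((\<lambda>t. \<bar>X t \<omega>\<bar>) ` F))\<^sup>2) \<le> norm (\<Sum>t\<in>F. (X t \<omega>)\<^sup>2)"
    proof (intro AE_I2)
      fix \<omega>
      have "Max ((\<lambda>t. \<bar>X t \<omega>\<bar>) ` F) \<in> (\<lambda>t. \<bar>X t \<omega>\<bar>) ` F" using F by (intro Max_in) auto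
      then obtain t0 where "t0 \<in> F" "Max ((\<lambda>t. \<bar>X t \<omega>\<bar>) ` F) = \<bar>X t0 \<omega>\<bar>" by auto
      then have "(Max ((\<lambda>t. \<bar>X t \<omega>\<bar>) ` F))\<^sup>2 \<le> (\<Sum>t\<in>F. (X t \<omega>)\<^sup>2)"
        using F(1) by (auto intro!: member_le_sum)
      then show "norm ((Max ((\<lambda>t. \<bar>X t \<omega>\<bar>) ` F))\<^sup>2) \<le> norm (\<Sum>t\<in>F. (X t \<omega>)\<^sup>2)"
        by (simp add: sum_nonneg)
    qed
  qed (use F(1) in measurable)
  show "ennreal x * emeasure M {\<omega>\<in>space M. x \<le> Max ((\<lambda>t. \<bar>X t \<omega>\<bar>) ` F)}
      \<le> (\<integral>\<^sup>+\<omega>. ennreal (indicator {\<omega>\<in>space M. x \<le> Max ((\<lambda>t. \<bar>X t \<omega>\<bar>) ` F)} \<omega> * \<bar>X (Max F) \<omega>\<bar>) \<partial>M)"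
    if "0 < x" for x
    by (rule doob_maximal_inequality_finite[where F=F and G=G and X=X and M=M, OF F sub mono meas int mart that])
qed

lemma power2_SUP_le_SUP_power2:
  fixes Y :: "nat \<Rightarrow> ennreal"
  assumes "incseq Y"
  shows "(SUP n. Y n)\<^sup>2 \<le> (SUP n. (Y n)\<^sup>2)"
proof -
  have "(SUP n. Y n)\<^sup>2 = (SUP j. SUP i. Y i * Y j)"
    by (simp add: power2_eq_square SUP_mult_left_ennreal SUP_mult_right_ennreal)
  also have "\<dots> \<le> (SUP n. (Y n)\<^sup>2)"
  proof (intro SUP_least)
    fix i j
    have "Y i * Y j \<le> Y (max i j) * Y (max i j)"
      using assms by (intro mult_mono) (auto simp: incseq_def)
    also have "\<dots> \<le> (SUP n. (Y n)\<^sup>2)"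
      by (rule SUP_upper2[of "max i j"]) (auto simp: power2_eq_square)
    finally show "Y i * Y j \<le> (SUP n. (Y n)\<^sup>2)" .
  qed
  finally show ?thesis .
qed

lemma SUP_Icc_eq_SUP_rat_right_continuous:
  fixes f :: "real \<Rightarrow> real"
  assumes sT: "s \<le> T" and rc: "\<And>t. s \<le> t \<Longrightarrow> t < T \<Longrightarrow> (f \<longlongrightarrow> f t) (at_right t)"
  shows "(SUP t\<in>{s..T}. ennreal \<bar>f t\<bar>) = (SUP t\<in>insert T ({s..<T} \<inter> \<rat>). ennreal \<bar>f t\<bar>)"
    (is "?sup = (SUP t\<in>?R. _)")
proof (rule antisym)
  show "(SUP t\<in>?R. ennreal \<bar>f t\<bar>) \<le> ?sup"
    using sT by (intro SUP_subset_mono) auto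
  show "?sup \<le> (SUP t\<in>?R. ennreal \<bar>f t\<bar>)"
  proof (rule SUP_least)
    fix t assume t: "t \<in> {s..T}"
    show "ennreal \<bar>f t\<bar> \<le> (SUP t\<in>?R. ennreal \<bar>f t\<bar>)"
    proof (cases "t = T")
      case False
      with t have tT: "t < T" by auto
      have lim: "((\<lambda>u. ennreal \<bar>f u\<bar>) \<longlongrightarrow> ennreal \<bar>f t\<bar>) (at_right t)"
        using rc[of t] t tT by (intro tendsto_ennrealI tendsto_rabs) auto
      show ?thesis
      proof (rule ccontr)
        assume "\<not> ?thesis"
        then have "\<forall>\<^sub>F u in at_right t. (SUP t\<in>?R. ennreal \<bar>f t\<bar>) < ennreal \<bar>f u\<bar>"
          using order_tendstoD(1)[OF lim] by (simp add: not_le)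
        then obtain b where "t < b" and b: "\<And>u. t < u \<Longrightarrow> u < b \<Longrightarrow> (SUP t\<in>?R. ennreal \<bar>f t\<bar>) < ennreal \<bar>f u\<bar>"
          by (auto simp: eventually_at_right_field)
        obtain q where q: "q \<in> \<rat>" "t < q" "q < min b T"
          using Rats_dense_in_real[of t "min b T"] tT \<open>t < b\<close> by auto
        then have "ennreal \<bar>f q\<bar> \<le> (SUP t\<in>?R. ennreal \<bar>f t\<bar>)"
          using t by (intro SUP_upper) auto
        with b[of q] q show False by auto
      qed
    qed (auto intro: SUP_upper)
  qed
qed

lemma borel_measurable_SUP_Icc_right_continuous:
  fixes X :: "real \<Rightarrow> 'a \<Rightarrow> real"
  assumes sT: "s \<le> T" and meas: "\<And>t. s \<le> t \<Longrightarrow> t \<le> T \<Longrightarrow> X t \<in> borel_measurable M"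
    and rc: "\<And>\<omega> t. \<omega> \<in> space M \<Longrightarrow> s \<le> t \<Longrightarrow> t < T \<Longrightarrow> ((\<lambda>u. X u \<omega>) \<longlongrightarrow> X t \<omega>) (at_right t)"
  shows "(\<lambda>\<omega>. SUP t\<in>{s..T}. ennreal \<bar>X t \<omega>\<bar>) \<in> borel_measurable M"
proof -
  have "(\<lambda>\<omega>. SUP t\<in>insert T ({s..<T} \<inter> \<rat>). ennreal \<bar>X t \<omega>\<bar>) \<in> borel_measurable M"
  proof (rule borel_measurable_SUP)
    fix t assume "t \<in> insert T ({s..<T} \<inter> \<rat>)"
    then have [measurable]: "X t \<in> borel_measurable M" using sT by (auto intro: meas)
    show "(\<lambda>\<omega>. ennreal \<bar>X t \<omega>\<bar>) \<in> borel_measurable M" by measurable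
  qed (auto intro: countable_rat)
  then show ?thesis
    by (rule measurable_cong[THEN iffD1, rotated])
       (simp add: SUP_Icc_eq_SUP_rat_right_continuous[OF sT] rc)
qed

lemma rat_Icc_finite_exhaustion:
  fixes s T :: real
  assumes "s \<le> T"
  obtains F :: "nat \<Rightarrow> real set"
  where "\<And>n. finite (F n)" "\<And>n. T \<in> F n" "\<And>n. F n \<subseteq> {s..T}" "\<And>n. F n \<subseteq> F (Suc n)"
    and "\<And>r. r \<in> insert T ({s..<T} \<inter> \<rat>) \<Longrightarrow> \<exists>n. r \<in> F n"
proof -
  let ?R = "insert T ({s..<T} \<inter> \<rat>)"
  have range: "range (from_nat_into ?R) = ?R"
    by (intro range_from_nat_into) (auto intro: countable_rat)
  have in_Icc: "from_nat_into ?R n \<in> {s..T}" for n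
    using from_nat_into[of ?R n] assms by auto
  show thesis
  proof (rule that[of "\<lambda>n. insert T (from_nat_into ?R ` {..n})"])
    fix r assume "r \<in> ?R"
    then obtain n where "r = from_nat_into ?R n" using range by blast
    then show "\<exists>n. r \<in> insert T (from_nat_into ?R ` {..n})" by auto
  qed (use assms in_Icc in \<open>auto simp: atMost_Suc\<close>)
qed

lemma doob_L2_inequality_right_continuous:
  fixes X :: "real \<Rightarrow> 'a \<Rightarrow> real" and G :: "real \<Rightarrow> 'a measure"
  assumes M: "sigma_finite_measure M" and sT: "s \<le> T"
    and sub: "\<And>t. sets (G t) \<subseteq> sets M" "\<And>t. space (G t) = space M"
    and mono: "\<And>t u. t \<le> u \<Longrightarrow> sets (G t) \<subseteq> sets (G u)"
    and meas: "\<And>t. s \<le> t \<Longrightarrow> t \<le> T \<Longrightarrow> X t \<in> borel_measurable (G t)"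
    and int: "\<And>t. s \<le> t \<Longrightarrow> t \<le> T \<Longrightarrow> integrable M (X t)"
    and int2: "\<And>t. s \<le> t \<Longrightarrow> t \<le> T \<Longrightarrow> integrable M (\<lambda>\<omega>. (X t \<omega>)\<^sup>2)"
    and mart: "\<And>t B. s \<le> t \<Longrightarrow> t \<le> T \<Longrightarrow> B \<in> sets (G t) \<Longrightarrow>
        (\<integral>\<omega>. indicator B \<omega> * X T \<omega> \<partial>M) = (\<integral>\<omega>. indicator B \<omega> * X t \<omega> \<partial>M)"
    and rc: "\<And>\<omega> t. \<omega> \<in> space M \<Longrightarrow> s \<le> t \<Longrightarrow> t < T \<Longrightarrow> ((\<lambda>u. X u \<omega>) \<longlongrightarrow> X t \<omega>) (at_right t)"
  shows "(\<integral>\<^sup>+\<omega>. (SUP t\<in>{s..T}. ennreal \<bar>X t \<omega>\<bar>)\<^sup>2 \<partial>M) \<le> 4 * (\<integral>\<^sup>+\<omega>. ennreal ((X T \<omega>)\<^sup>2) \<partial>M)"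
proof -
  obtain F where F: "\<And>n. finite (F n)" "\<And>n. T \<in> F n" "\<And>n. F n \<subseteq> {s..T}" "\<And>n. F n \<subseteq> F (Suc n)"
    and F_exhaust: "\<And>r. r \<in> insert T ({s..<T} \<inter> \<rat>) \<Longrightarrow> \<exists>n. r \<in> F n"
    using rat_Icc_finite_exhaustion[OF sT] by blast
  have F_ne: "F n \<noteq> {}" for n using F(2) by blast
  have Max_F: "Max (F n) = T" for n
    using F(1,2) F(3)[of n] by (intro Max_eqI) auto
  have XM[measurable]: "X t \<in> borel_measurable M" if "s \<le> t" "t \<le> T" for t
    using borel_measurable_subalgebra[OF sub meas[OF that]] .
  define Y where "Y n \<omega> = Max ((\<lambda>t. \<bar>X t \<omega>\<bar>) ` F n)" for n \<omega>
  have Y_nonneg: "0 \<le> Y n \<omega>" for n \<omega>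
    unfolding Y_def using F(1,2)[of n] by (intro order_trans[OF abs_ge_zero Max_ge]) auto
  have [measurable]: "Y n \<in> borel_measurable M" for n
    unfolding Y_def using F(1,3)[of n] by (intro borel_measurable_Max) auto
  have Y_bound: "(\<integral>\<^sup>+\<omega>. (ennreal (Y n \<omega>))\<^sup>2 \<partial>M) \<le> 4 * (\<integral>\<^sup>+\<omega>. ennreal ((X T \<omega>)\<^sup>2) \<partial>M)" for n
  proof -
    have "(\<integral>\<^sup>+\<omega>. ennreal ((Y n \<omega>)\<^sup>2) \<partial>M) \<le> 4 * (\<integral>\<^sup>+\<omega>. ennreal ((X (Max (F n)) \<omega>)\<^sup>2) \<partial>M)"
      unfolding Y_def
      by (rule doob_L2_inequality_finite[OF M F(1) F_ne, where G=G])
         (use F(3)[of n] sub mono meas int int2 mart Max_F in \<open>auto simp: subset_iff\<close>)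
    then show ?thesis by (simp add: Max_F ennreal_power Y_nonneg)
  qed
  have Y_mono: "incseq (\<lambda>n. ennreal (Y n \<omega>))" for \<omega>
    unfolding Y_def using F_ne F(1,4)
    by (intro incseq_SucI ennreal_leI Max_mono image_mono) auto
  have sup_le: "(SUP t\<in>{s..T}. ennreal \<bar>X t \<omega>\<bar>) \<le> (SUP n. ennreal (Y n \<omega>))" if "\<omega> \<in> space M" for \<omega>
  proof -
    have "(SUP t\<in>{s..T}. ennreal \<bar>X t \<omega>\<bar>) = (SUP t\<in>insert T ({s..<T} \<inter> \<rat>). ennreal \<bar>X t \<omega>\<bar>)"
      using that by (intro SUP_Icc_eq_SUP_rat_right_continuous sT rc)
    also have "\<dots> \<le> (SUP n. ennreal (Y n \<omega>))"
    proof (rule SUP_least)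
      fix r assume "r \<in> insert T ({s..<T} \<inter> \<rat>)"
      then obtain n where "r \<in> F n" using F_exhaust by blast
      then have "\<bar>X r \<omega>\<bar> \<le> Y n \<omega>" unfolding Y_def using F(1) by (intro Max_ge) auto
      then show "ennreal \<bar>X r \<omega>\<bar> \<le> (SUP n. ennreal (Y n \<omega>))"
        by (intro SUP_upper2[of n] ennreal_leI) auto
    qed
    finally show ?thesis .
  qed
  have "(\<integral>\<^sup>+\<omega>. (SUP t\<in>{s..T}. ennreal \<bar>X t \<omega>\<bar>)\<^sup>2 \<partial>M) \<le> (\<integral>\<^sup>+\<omega>. (SUP n. (ennreal (Y n \<omega>))\<^sup>2) \<partial>M)"
    using sup_le by (intro nn_integral_mono order_trans[OF power_mono power2_SUP_le_SUP_power2[OF Y_mono]]) auto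
  also have "\<dots> = (SUP n. \<integral>\<^sup>+\<omega>. (ennreal (Y n \<omega>))\<^sup>2 \<partial>M)"
    using Y_mono by (intro nn_integral_monotone_convergence_SUP) (auto simp: incseq_def le_fun_def power_mono)
  also have "\<dots> \<le> 4 * (\<integral>\<^sup>+\<omega>. ennreal ((X T \<omega>)\<^sup>2) \<partial>M)"
    by (rule SUP_least) (rule Y_bound)
  finally show ?thesis .
qed

section \<open>The canonical filtrations\<close>

lemma space_Fall: "space Fall = Omega"
  by (simp add: Fall_def space_measure_of_conv)

lemma space_Fcompl: "space (Fcompl Q t) = Omega"
  by (simp add: Fcompl_def space_measure_of_conv)

lemma space_Fo: "space (Fo t) = Omega"
  by (simp add: Fo_def space_measure_of_conv)

lemma sets_Fo_subset_Fall: "sets (Fo u) \<subseteq> sets Fall"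
proof -
  have "{Xc r -` B \<inter> Omega | r B. 0 \<le> r \<and> B \<in> sets borel} \<subseteq> sets Fall"
    unfolding Fall_def by (subst sets_measure_of) (auto intro: sigma_sets.Basic)
  moreover have "Omega \<in> sets Fall"
    using sets.top[of Fall] by (simp add: space_Fall)
  ultimately show ?thesis
    unfolding Fo_def by (subst sigma_le_sets) auto
qed

lemma Inter_sets_Fo_subset_Pow: "(\<Inter>u\<in>{t<..}. sets (Fo u)) \<subseteq> Pow Omega"
proof
  fix A assume "A \<in> (\<Inter>u\<in>{t<..}. sets (Fo u))"
  then have "A \<in> sets (Fo (t + 1))" by auto
  then show "A \<in> Pow Omega" using sets.sets_into_space by (fastforce simp: space_Fo)
qed

lemma sets_Ft_subset_Fall: "sets (Ft t) \<subseteq> sets Fall"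
proof -
  have "(\<Inter>u\<in>{t<..}. sets (Fo u)) \<subseteq> sets Fall"
    using sets_Fo_subset_Fall[of "t + 1"] by auto
  moreover have "Omega \<in> sets Fall"
    using sets.top[of Fall] by (simp add: space_Fall)
  ultimately show ?thesis
    unfolding Ft_def using Inter_sets_Fo_subset_Pow by (subst sigma_le_sets) auto
qed

lemma sets_Ft_mono: "t \<le> u \<Longrightarrow> sets (Ft t) \<subseteq> sets (Ft u)"
  unfolding Ft_def using Inter_sets_Fo_subset_Pow
  by (subst (1 2) sets_measure_of) (auto intro!: sigma_sets_mono')

lemma sets_Fcompl_mono: "t \<le> u \<Longrightarrow> sets (Fcompl Q t) \<subseteq> sets (Fcompl Q u)"
  unfolding Fcompl_def using sets_Ft_mono[of t u]
  by (subst (1 2) sets_measure_of) (auto intro!: sigma_sets_mono')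

lemma sets_Fcompl_subset_completion:
  assumes "sets Q = sets Fall"
  shows "sets (Fcompl Q t) \<subseteq> sets (completion Q)"
proof -
  let ?G = "{A. A \<subseteq> Omega \<and> (\<exists>B\<in>sets (Ft t). \<exists>N\<in>null_sets Q. (A - B) \<union> (B - A) \<subseteq> N)}"
  have "Omega \<in> sets (completion Q)"
    using sets.top[of "completion Q"] sets_eq_imp_space_eq[OF assms] by (simp add: space_Fall)
  moreover have "?G \<subseteq> sets (completion Q)"
  proof
    fix A assume "A \<in> ?G"
    then obtain B N where "B \<in> sets (Ft t)" "N \<in> null_sets Q" "(A - B) \<union> (B - A) \<subseteq> N" by blast
    moreover from this have "B \<in> sets Q" "N \<in> sets Q" using sets_Ft_subset_Fall assms by auto
    ultimately show "A \<in> sets (completion Q)" by (intro sets_completionI[of A "B - N" "A \<inter> N" N]) auto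
  qed
  ultimately show ?thesis
    unfolding Fcompl_def by (subst sigma_le_sets) blast+
qed

section \<open>Integrals against \<open>dV\<close>\<close>

lemma integrator_interval_measure:
  assumes "integrator T V"
  shows "sigma_finite_measure (interval_measure V)"
    and "a \<le> b \<Longrightarrow> emeasure (interval_measure V) {a..b} = ennreal (V b - V a)"
proof -
  have mono: "\<And>a b. a \<le> b \<Longrightarrow> V a \<le> V b" and cont: "continuous_on UNIV V"
    using assms by (auto simp: integrator_def mono_def)
  then show "sigma_finite_measure (interval_measure V)"
    by (intro sigma_finite_interval_measure)
       (auto simp: continuous_on_eq_continuous_within intro: continuous_within_subset)
  show "emeasure (interval_measure V) {a..b} = ennreal (V b - V a)" if "a \<le> b"
    using that mono cont by (rule emeasure_interval_measure_Icc)
qed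

lemma dVint_right_continuous:
  assumes int: "set_integrable (interval_measure V) {s..T} f" and t: "s \<le> t" "t < T"
  shows "((\<lambda>u. dVint V s u f) \<longlongrightarrow> dVint V s t f) (at_right t)"
proof (rule tendsto_at_right_sequentially[OF t(2)])
  fix S :: "nat \<Rightarrow> real"
  assume S: "\<And>n. t < S n" "\<And>n. S n < T" "decseq S" "S \<longlonglongrightarrow> t"
  have "(\<Inter>n. {s..S n}) = {s..t}"
  proof (intro equalityI subsetI)
    fix x assume "x \<in> (\<Inter>n. {s..S n})"
    then show "x \<in> {s..t}"
      using LIMSEQ_le_const[OF S(4), of x] by auto
  next
    fix x assume x: "x \<in> {s..t}"
    moreover have "x \<le> S n" for n using x S(1)[of n] by simp
    ultimately show "x \<in> (\<Inter>n. {s..S n})" by auto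
  qed
  moreover have "(\<lambda>n. dVint V s (S n) f) \<longlonglongrightarrow> set_lebesgue_integral (interval_measure V) (\<Inter>n. {s..S n}) f"
    unfolding dVint_def using S(2,3)
    by (intro set_integral_cont_down set_integrable_subset[OF int])
       (auto simp: decseq_def less_imp_le)
  ultimately show "(\<lambda>n. dVint V s (S n) f) \<longlonglongrightarrow> dVint V s t f"
    by (simp add: dVint_def)
qed

lemma progressive_measurable_interval:
  fixes Y :: "real \<Rightarrow> (real \<Rightarrow> 'e::polish_space) \<Rightarrow> real" and Q :: "(real \<Rightarrow> 'e) measure"
  assumes prog: "progressive Y" and Q: "sets Q = sets Fall" and ab: "0 \<le> a" "a \<le> b"
  shows "(\<lambda>(\<omega>, r). indicator {a..b} r * Y r \<omega>) \<in> borel_measurable (Q \<Otimes>\<^sub>M interval_measure V)"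
proof -
  \<comment> \<open>clamping time into \<open>[0, b]\<close> changes nothing on \<open>{a..b}\<close> and lands in the domain of progressivity\<close>
  define c where "c r = max 0 (min b r)" for r
  have Y: "(\<lambda>(r, \<omega>). Y r \<omega>) \<in> borel_measurable (restrict_space borel {0..b} \<Otimes>\<^sub>M Fo b)"
    using prog ab unfolding progressive_def by auto
  have clamp: "(\<lambda>p. (c (snd p), fst p)) \<in> (Q \<Otimes>\<^sub>M borel) \<rightarrow>\<^sub>M (restrict_space borel {0..b} \<Otimes>\<^sub>M Fo b)"
  proof (rule measurable_Pair)
    show "(\<lambda>p. c (snd p)) \<in> (Q \<Otimes>\<^sub>M borel) \<rightarrow>\<^sub>M restrict_space borel {0..b}"
      using ab by (intro measurable_restrict_space2) (auto simp: c_def)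
    have "(Q \<Otimes>\<^sub>M (borel :: real measure)) \<rightarrow>\<^sub>M Q \<subseteq> (Q \<Otimes>\<^sub>M borel) \<rightarrow>\<^sub>M Fo b"
      using sets_Fo_subset_Fall[of b] Q sets_eq_imp_space_eq[OF Q]
      by (intro measurable_mono) (auto simp: space_Fo space_Fall)
    then show "fst \<in> (Q \<Otimes>\<^sub>M (borel :: real measure)) \<rightarrow>\<^sub>M Fo b"
      by (rule subsetD) (rule measurable_fst)
  qed
  have [measurable]: "(\<lambda>p. Y (c (snd p)) (fst p)) \<in> borel_measurable (Q \<Otimes>\<^sub>M borel)"
    using measurable_comp[OF clamp Y] by (simp add: o_def)
  have "(\<lambda>(\<omega>, r). indicator {a..b} r * Y r \<omega>) = (\<lambda>p. indicator {a..b} (snd p) * Y (c (snd p)) (fst p))"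
    using ab by (auto simp: fun_eq_iff indicator_def c_def)
  also have "\<dots> \<in> borel_measurable (Q \<Otimes>\<^sub>M borel)" by measurable
  also have "borel_measurable (Q \<Otimes>\<^sub>M borel) = borel_measurable (Q \<Otimes>\<^sub>M interval_measure V)"
    by (intro measurable_cong_sets sets_pair_measure_cong) auto
  finally show ?thesis .
qed

lemma abs_dVint_le_dVint_abs:
  assumes "t \<le> T"
  shows "ennreal \<bar>dVint V s t f\<bar> \<le> dVint_abs V s T f"
proof (cases "set_integrable (interval_measure V) {s..t} f")
  case True
  then have "ennreal \<bar>dVint V s t f\<bar> \<le> (\<integral>\<^sup>+r. norm (indicator {s..t} r * f r) \<partial>interval_measure V)"
    unfolding dVint_def set_lebesgue_integral_def
    using integral_norm_bound_ennreal[OF True[unfolded set_integrable_def]] by simp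
  also have "\<dots> \<le> dVint_abs V s T f"
    unfolding dVint_abs_def using assms
    by (intro nn_integral_mono) (auto simp: indicator_def)
  finally show ?thesis .
qed (simp add: dVint_def set_integrable_def set_lebesgue_integral_def not_integrable_integral_eq)

lemma dVint_abs_power2_le:
  assumes V: "integrator T V" and "s \<le> T"
    and f[measurable]: "(\<lambda>r. indicator {s..T} r * f r) \<in> borel_measurable (interval_measure V)"
  shows "(dVint_abs V s T f)\<^sup>2
    \<le> ennreal (V T - V s) * set_nn_integral (interval_measure V) {s..T} (\<lambda>r. ennreal ((f r)\<^sup>2))"
proof -
  let ?\<mu> = "interval_measure V" and ?I = "indicator {s..T} :: real \<Rightarrow> ennreal"
  have "(\<lambda>r. ennreal \<bar>indicator {s..T} r * f r\<bar>) \<in> borel_measurable ?\<mu>" by measurable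
  moreover have "(\<lambda>r. ennreal \<bar>indicator {s..T} r * f r\<bar>) = (\<lambda>r. ennreal \<bar>f r\<bar> * ?I r)"
    by (auto simp: indicator_def fun_eq_iff)
  ultimately have [measurable]: "(\<lambda>r. ennreal \<bar>f r\<bar> * ?I r) \<in> borel_measurable ?\<mu>" by simp
  have "dVint_abs V s T f = (\<integral>\<^sup>+r. (ennreal \<bar>f r\<bar> * ?I r) * ?I r \<partial>?\<mu>)"
    unfolding dVint_abs_def by (intro nn_integral_cong) (simp add: indicator_def)
  then have "(dVint_abs V s T f)\<^sup>2 = (\<integral>\<^sup>+r. (ennreal \<bar>f r\<bar> * ?I r) * ?I r \<partial>?\<mu>)\<^sup>2"
    by simp
  also have "\<dots> \<le> (\<integral>\<^sup>+r. (ennreal \<bar>f r\<bar> * ?I r)\<^sup>2 \<partial>?\<mu>) * (\<integral>\<^sup>+r. (?I r)\<^sup>2 \<partial>?\<mu>)"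
    by (rule Cauchy_Schwarz_nn_integral) measurable
  also have "(\<integral>\<^sup>+r. (ennreal \<bar>f r\<bar> * ?I r)\<^sup>2 \<partial>?\<mu>) = set_nn_integral ?\<mu> {s..T} (\<lambda>r. ennreal ((f r)\<^sup>2))"
    by (intro nn_integral_cong) (simp add: indicator_def ennreal_power)
  also have "(\<integral>\<^sup>+r. (?I r)\<^sup>2 \<partial>?\<mu>) = ennreal (V T - V s)"
    using integrator_interval_measure(2)[OF V \<open>s \<le> T\<close>]
    by (subst nn_integral_cong[where v="?I"]) (auto simp: indicator_def)
  finally show ?thesis by (simp add: mult.commute)
qed

lemma measurable_dVint_progressive:
  fixes Y :: "real \<Rightarrow> (real \<Rightarrow> 'e::polish_space) \<Rightarrow> real" and Q :: "(real \<Rightarrow> 'e) measure"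
  assumes V: "integrator T V" and prog: "progressive Y" and Q: "sets Q = sets Fall"
    and st: "0 \<le> s" "s \<le> t"
  shows "(\<lambda>\<omega>. dVint V s t (\<lambda>r. Y r \<omega>)) \<in> borel_measurable Q"
    and "(\<lambda>\<omega>. dVint_abs V s t (\<lambda>r. Y r \<omega>)) \<in> borel_measurable Q"
    and "(\<lambda>\<omega>. set_nn_integral (interval_measure V) {s..t} (\<lambda>r. ennreal ((Y r \<omega>)\<^sup>2))) \<in> borel_measurable Q"
    and "\<omega> \<in> space Q \<Longrightarrow> (\<lambda>r. indicator {s..t} r * Y r \<omega>) \<in> borel_measurable (interval_measure V)"
proof -
  interpret \<mu>: sigma_finite_measure "interval_measure V"
    by (rule integrator_interval_measure(1)[OF V])
  have joint[measurable]: "(\<lambda>(\<omega>, r). indicator {s..t} r * Y r \<omega>) \<in> borel_measurable (Q \<Otimes>\<^sub>M interval_measure V)"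
    using prog Q st by (intro progressive_measurable_interval) auto
  show "(\<lambda>\<omega>. dVint V s t (\<lambda>r. Y r \<omega>)) \<in> borel_measurable Q"
    unfolding dVint_def set_lebesgue_integral_def
    using \<mu>.borel_measurable_lebesgue_integral[OF joint] by simp
  have "(\<lambda>\<omega>. \<integral>\<^sup>+r. ennreal \<bar>indicator {s..t} r * Y r \<omega>\<bar> \<partial>interval_measure V) \<in> borel_measurable Q"
    by (rule \<mu>.borel_measurable_nn_integral) measurable
  moreover have "(\<integral>\<^sup>+r. ennreal \<bar>indicator {s..t} r * Y r \<omega>\<bar> \<partial>interval_measure V) = dVint_abs V s t (\<lambda>r. Y r \<omega>)" for \<omega>
    unfolding dVint_abs_def by (intro nn_integral_cong) (simp add: indicator_def)
  ultimately show "(\<lambda>\<omega>. dVint_abs V s t (\<lambda>r. Y r \<omega>)) \<in> borel_measurable Q"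
    by simp
  have "(\<lambda>\<omega>. \<integral>\<^sup>+r. ennreal ((indicator {s..t} r * Y r \<omega>)\<^sup>2) \<partial>interval_measure V) \<in> borel_measurable Q"
    by (rule \<mu>.borel_measurable_nn_integral) measurable
  moreover have "(\<integral>\<^sup>+r. ennreal ((indicator {s..t} r * Y r \<omega>)\<^sup>2) \<partial>interval_measure V)
      = set_nn_integral (interval_measure V) {s..t} (\<lambda>r. ennreal ((Y r \<omega>)\<^sup>2))" for \<omega>
    by (intro nn_integral_cong) (simp add: indicator_def)
  ultimately show "(\<lambda>\<omega>. set_nn_integral (interval_measure V) {s..t} (\<lambda>r. ennreal ((Y r \<omega>)\<^sup>2))) \<in> borel_measurable Q"
    by simp
  show "(\<lambda>r. indicator {s..t} r * Y r \<omega>) \<in> borel_measurable (interval_measure V)" if "\<omega> \<in> space Q"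
    using measurable_Pair2[OF joint that] by simp
qed

lemma nn_integral_dVint_abs_power2_finite:
  fixes Y :: "real \<Rightarrow> (real \<Rightarrow> 'e::polish_space) \<Rightarrow> real" and Q :: "(real \<Rightarrow> 'e) measure"
  assumes V: "integrator T V" and prog: "progressive Y" and Q: "sets Q = sets Fall"
    and s: "0 \<le> s" "s \<le> T"
    and L2: "(\<integral>\<^sup>+\<omega>. set_nn_integral (interval_measure V) {s..T} (\<lambda>r. ennreal ((Y r \<omega>)\<^sup>2)) \<partial>Q) < \<infinity>"
  shows "(\<integral>\<^sup>+\<omega>. (dVint_abs V s T (\<lambda>r. Y r \<omega>))\<^sup>2 \<partial>Q) < \<infinity>"
proof -
  note Y = measurable_dVint_progressive[OF V prog Q s]
  have "(\<integral>\<^sup>+\<omega>. (dVint_abs V s T (\<lambda>r. Y r \<omega>))\<^sup>2 \<partial>Q)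
      \<le> (\<integral>\<^sup>+\<omega>. ennreal (V T - V s) * set_nn_integral (interval_measure V) {s..T} (\<lambda>r. ennreal ((Y r \<omega>)\<^sup>2)) \<partial>Q)"
    using Y(4) by (intro nn_integral_mono dVint_abs_power2_le[OF V s(2)])
  also have "\<dots> = ennreal (V T - V s) * (\<integral>\<^sup>+\<omega>. set_nn_integral (interval_measure V) {s..T} (\<lambda>r. ennreal ((Y r \<omega>)\<^sup>2)) \<partial>Q)"
    using Y(3) by (rule nn_integral_cmult)
  also have "\<dots> < \<infinity>"
    using L2 by (simp add: ennreal_mult_less_top)
  finally show ?thesis .
qed

lemma power2_add_le_ennreal: "((a::ennreal) + b)\<^sup>2 \<le> 4 * (a\<^sup>2 + b\<^sup>2)"
proof -
  have max: "(max a b)\<^sup>2 \<le> a\<^sup>2 + b\<^sup>2"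
    by (cases "a \<le> b") (simp_all add: max_def add_increasing add_increasing2)
  have "(a + b)\<^sup>2 \<le> (2 * max a b)\<^sup>2"
    by (intro power_mono) (simp_all add: mult_2 add_mono)
  also have "\<dots> = 4 * (max a b)\<^sup>2"
    by (simp add: power_mult_distrib)
  also have "\<dots> \<le> 4 * (a\<^sup>2 + b\<^sup>2)"
    using max by (rule mult_left_mono) simp
  finally show ?thesis .
qed

lemma ennreal_abs_diff3_le: "ennreal \<bar>a - b - c\<bar> \<le> ennreal \<bar>a\<bar> + ennreal \<bar>b\<bar> + ennreal \<bar>c\<bar>"
proof -
  have "ennreal \<bar>a - b - c\<bar> \<le> ennreal (\<bar>a\<bar> + \<bar>b\<bar> + \<bar>c\<bar>)" by (rule ennreal_leI) arith
  then show ?thesis by (simp add: ennreal_plus)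
qed

lemma nn_integral_power2_add_finite:
  fixes f g :: "'a \<Rightarrow> ennreal"
  assumes [measurable]: "f \<in> borel_measurable M" "g \<in> borel_measurable M"
    and "(\<integral>\<^sup>+x. (f x)\<^sup>2 \<partial>M) < \<infinity>" "(\<integral>\<^sup>+x. (g x)\<^sup>2 \<partial>M) < \<infinity>"
  shows "(\<integral>\<^sup>+x. (f x + g x)\<^sup>2 \<partial>M) < \<infinity>"
proof -
  have "(\<integral>\<^sup>+x. (f x + g x)\<^sup>2 \<partial>M) \<le> (\<integral>\<^sup>+x. 4 * ((f x)\<^sup>2 + (g x)\<^sup>2) \<partial>M)"
    by (intro nn_integral_mono power2_add_le_ennreal)
  also have "\<dots> = 4 * ((\<integral>\<^sup>+x. (f x)\<^sup>2 \<partial>M) + (\<integral>\<^sup>+x. (g x)\<^sup>2 \<partial>M))"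
    by (simp add: nn_integral_cmult nn_integral_add)
  also have "\<dots> < \<infinity>"
    using assms(3,4) by (simp add: ennreal_mult_less_top)
  finally show ?thesis .
qed

lemma integrable_power2_iff_nn_integral:
  fixes f :: "'a \<Rightarrow> real"
  assumes "f \<in> borel_measurable M"
  shows "integrable M (\<lambda>x. (f x)\<^sup>2) \<longleftrightarrow> (\<integral>\<^sup>+x. (ennreal \<bar>f x\<bar>)\<^sup>2 \<partial>M) < \<infinity>"
  using assms by (simp add: integrable_iff_bounded ennreal_power)

lemma square_integrable_procI:
  fixes X :: "real \<Rightarrow> 'a \<Rightarrow> real" and S :: "'a \<Rightarrow> ennreal"
  assumes meas: "\<And>t. 0 \<le> t \<Longrightarrow> X t \<in> borel_measurable M"
    and dom: "\<And>t. 0 \<le> t \<Longrightarrow> AE \<omega> in M. ennreal \<bar>X t \<omega>\<bar> \<le> S \<omega>"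
    and S: "(\<integral>\<^sup>+\<omega>. (S \<omega>)\<^sup>2 \<partial>M) < \<infinity>"
  shows "square_integrable_proc M X"
proof -
  have bound: "(\<integral>\<^sup>+\<omega>. (ennreal \<bar>X t \<omega>\<bar>)\<^sup>2 \<partial>M) \<le> (\<integral>\<^sup>+\<omega>. (S \<omega>)\<^sup>2 \<partial>M)" if "0 \<le> t" for t
    using dom[OF that] by (rule nn_integral_mono_AE[OF eventually_mono]) (auto intro: power_mono)
  have int: "integrable M (\<lambda>\<omega>. (X t \<omega>)\<^sup>2)" if "0 \<le> t" for t
    using bound[OF that] S by (simp add: integrable_power2_iff_nn_integral[OF meas[OF that]])
  have "(\<integral>\<omega>. (X t \<omega>)\<^sup>2 \<partial>M) \<le> enn2real (\<integral>\<^sup>+\<omega>. (S \<omega>)\<^sup>2 \<partial>M)" if "0 \<le> t" for t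
  proof -
    have [measurable]: "X t \<in> borel_measurable M" by (rule meas[OF that])
    have "(\<lambda>\<omega>. (X t \<omega>)\<^sup>2) \<in> borel_measurable M" by measurable
    then have "(\<integral>\<omega>. (X t \<omega>)\<^sup>2 \<partial>M) = enn2real (\<integral>\<^sup>+\<omega>. ennreal ((X t \<omega>)\<^sup>2) \<partial>M)"
      by (rule integral_eq_nn_integral) simp
    also have "\<dots> \<le> enn2real (\<integral>\<^sup>+\<omega>. (S \<omega>)\<^sup>2 \<partial>M)"
      using bound[OF that] S by (intro enn2real_mono) (simp_all add: ennreal_power)
    finally show ?thesis .
  qed
  then show ?thesis
    using int unfolding square_integrable_proc_def by blast
qed

section \<open>Versions of \<open>M[\<Phi>]\<close>\<close>

lemma markov_familyD:
  assumes "markov_family P" "0 \<le> s" "\<eta> \<in> Omega"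
  shows "prob_space (P s \<eta>)" "sets (P s \<eta>) = sets Fall"
proof -
  have "\<forall>s\<ge>0. \<forall>\<eta>\<in>Omega. prob_space (P s \<eta>) \<and> sets (P s \<eta>) = sets Fall"
    using assms(1) unfolding markov_family_def by (rule conjunct1)
  then show "prob_space (P s \<eta>)" "sets (P s \<eta>) = sets Fall" using assms(2,3) by auto
qed

lemma weak_generatorD:
  assumes "weak_generator P T V D A" "\<Phi> \<in> D"
  shows "progressive (A \<Phi>)"
    and "\<And>\<omega> t. \<omega> \<in> Omega \<Longrightarrow> 0 \<le> t \<Longrightarrow> dVint_abs V 0 t (\<lambda>r. A \<Phi> r \<omega>) < \<infinity>"
    and "\<And>s \<eta> t. 0 \<le> s \<Longrightarrow> \<eta> \<in> Omega \<Longrightarrow> s \<le> t \<Longrightarrow> integrable (P s \<eta>) (\<Phi> t)"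
    and "\<And>t \<omega>. T \<le> t \<Longrightarrow> \<omega> \<in> Omega \<Longrightarrow> \<Phi> t \<omega> = \<Phi> T \<omega>"
    and "\<And>t \<omega>. T < t \<Longrightarrow> \<omega> \<in> Omega \<Longrightarrow> A \<Phi> t \<omega> = 0"
  using assms unfolding weak_generator_def by simp_all

locale MPhi_version =
  fixes P :: "real \<Rightarrow> (real \<Rightarrow> 'e::polish_space) \<Rightarrow> (real \<Rightarrow> 'e) measure"
    and T :: real and V :: "real \<Rightarrow> real" and \<Phi> A\<Phi> :: "real \<Rightarrow> (real \<Rightarrow> 'e) \<Rightarrow> real"
    and s :: real and \<eta> :: "real \<Rightarrow> 'e" and M :: "real \<Rightarrow> (real \<Rightarrow> 'e) \<Rightarrow> real"
  assumes prob: "prob_space (P s \<eta>)" and sets_P: "sets (P s \<eta>) = sets Fall"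
    and V: "integrator T V" and s_nonneg: "0 \<le> s"
    and \<Phi>_const: "\<And>t \<omega>. T \<le> t \<Longrightarrow> \<omega> \<in> Omega \<Longrightarrow> \<Phi> t \<omega> = \<Phi> T \<omega>"
    and A\<Phi>_zero: "\<And>t \<omega>. T < t \<Longrightarrow> \<omega> \<in> Omega \<Longrightarrow> A\<Phi> t \<omega> = 0"
    and version: "MAF_version P s \<eta> (MPhi V \<Phi> A\<Phi>) M"
begin

abbreviation Q :: "(real \<Rightarrow> 'e) measure" where "Q \<equiv> completion (P s \<eta>)"

lemma space_P[simp]: "space (P s \<eta>) = Omega"
  using sets_eq_imp_space_eq[OF sets_P] by (simp add: space_Fall)

lemma M_cadlag_martingale: "cadlag_martingale Q (Fcompl (P s \<eta>)) M"
  using version unfolding MAF_version_def by blast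

lemma M_measurable:
  assumes "0 \<le> t"
  shows "M t \<in> borel_measurable Q"
proof (rule borel_measurable_subalgebra)
  show "sets (Fcompl (P s \<eta>) t) \<subseteq> sets Q" by (rule sets_Fcompl_subset_completion[OF sets_P])
  show "space (Fcompl (P s \<eta>) t) = space Q" by (simp add: space_Fcompl)
  show "M t \<in> borel_measurable (Fcompl (P s \<eta>) t)"
    using M_cadlag_martingale assms unfolding cadlag_martingale_def by blast
qed

lemma M_right_continuous:
  assumes "\<omega> \<in> Omega" "0 \<le> t"
  shows "((\<lambda>u. M u \<omega>) \<longlongrightarrow> M t \<omega>) (at_right t)"
proof -
  have "cadlag_on_Rplus (\<lambda>t. M t \<omega>)"
    using M_cadlag_martingale assms(1) unfolding cadlag_martingale_def space_completion space_P by blast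
  then show ?thesis using assms(2) unfolding cadlag_on_Rplus_def by blast
qed

lemma M_eq_0: "t \<in> {0..s} \<Longrightarrow> \<omega> \<in> Omega \<Longrightarrow> M t \<omega> = 0"
  using version unfolding MAF_version_def by blast

lemma M_increment:
  assumes "s \<le> t" "t \<le> u"
  shows "AE \<omega> in Q. M u \<omega> = M t \<omega> + MPhi V \<Phi> A\<Phi> t u \<omega>"
proof -
  have "AE \<omega> in P s \<eta>. MPhi V \<Phi> A\<Phi> t u \<omega> = M u \<omega> - M t \<omega>"
    using version assms unfolding MAF_version_def by blast
  then have "AE \<omega> in Q. MPhi V \<Phi> A\<Phi> t u \<omega> = M u \<omega> - M t \<omega>"
    by (rule AE_completion)
  then show ?thesis by eventually_elim simp
qed

lemma MPhi_eq_0_after_T: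
  assumes "T \<le> a" "a \<le> b" "\<omega> \<in> Omega"
  shows "MPhi V \<Phi> A\<Phi> a b \<omega> = 0"
proof -
  \<comment> \<open>\<open>A\<Phi>\<close> is only known to vanish after \<open>T\<close>; the continuous \<open>V\<close> does not charge \<open>{T}\<close>\<close>
  have "{T} \<in> null_sets (interval_measure V)"
    using integrator_interval_measure(2)[OF V order_refl] by (auto intro: null_setsI)
  then have "AE r in interval_measure V. r \<notin> {T}"
    by (rule AE_not_in)
  then have "AE r in interval_measure V. indicator {a..b} r * A\<Phi> r \<omega> = 0"
    by eventually_elim (use assms in \<open>auto simp: indicator_def intro!: A\<Phi>_zero\<close>)
  then have "dVint V a b (\<lambda>r. A\<Phi> r \<omega>) = 0"
    unfolding dVint_def set_lebesgue_integral_def by (simp add: integral_eq_zero_AE)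
  then show ?thesis
    using assms \<Phi>_const[of a \<omega>] \<Phi>_const[of b \<omega>] by (simp add: MPhi_def)
qed

lemma M_const_after_T:
  assumes "s \<le> t" "T \<le> t" "t \<le> u"
  shows "AE \<omega> in Q. M u \<omega> = M t \<omega>"
  using M_increment[OF assms(1,3)] AE_space
  by eventually_elim (use assms in \<open>simp add: MPhi_eq_0_after_T\<close>)

lemma square_integrable_M:
  assumes sup_L2: "s \<le> T \<Longrightarrow> (\<integral>\<^sup>+\<omega>. (SUP t\<in>{s..T}. ennreal \<bar>M t \<omega>\<bar>)\<^sup>2 \<partial>Q) < \<infinity>"
  shows "square_integrable_proc Q M"
proof (rule square_integrable_procI[OF M_measurable])
  \<comment> \<open>\<open>M\<close> vanishes before \<open>s\<close> and is constant after \<open>max s T\<close>\<close>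
  define T' where "T' = max s T"
  show "AE \<omega> in Q. ennreal \<bar>M t \<omega>\<bar> \<le> (SUP t\<in>{s..T'}. ennreal \<bar>M t \<omega>\<bar>)" if "0 \<le> t" for t
  proof (cases "t \<le> T'")
    case True
    show ?thesis
    proof (rule AE_I2)
      fix \<omega> assume "\<omega> \<in> space Q"
      then show "ennreal \<bar>M t \<omega>\<bar> \<le> (SUP t\<in>{s..T'}. ennreal \<bar>M t \<omega>\<bar>)"
        using that True M_eq_0[of t \<omega>] by (cases "t \<le> s") (auto intro: SUP_upper)
    qed
  next
    case False
    have "AE \<omega> in Q. M t \<omega> = M T' \<omega>"
      using False by (intro M_const_after_T) (auto simp: T'_def)
    then show ?thesis
      by eventually_elim (auto simp: T'_def intro: SUP_upper)
  qed
  show "(\<integral>\<^sup>+\<omega>. (SUP t\<in>{s..T'}. ennreal \<bar>M t \<omega>\<bar>)\<^sup>2 \<partial>Q) < \<infinity>"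
  proof (cases "s \<le> T")
    case False
    then have "(SUP t\<in>{s..T'}. ennreal \<bar>M t \<omega>\<bar>) = 0" if "\<omega> \<in> space Q" for \<omega>
      using that s_nonneg by (simp add: T'_def M_eq_0)
    then have "(\<integral>\<^sup>+\<omega>. (SUP t\<in>{s..T'}. ennreal \<bar>M t \<omega>\<bar>)\<^sup>2 \<partial>Q) = (\<integral>\<^sup>+\<omega>. 0 \<partial>Q)"
      by (intro nn_integral_cong) simp
    then show ?thesis by simp
  qed (use sup_L2 in \<open>simp add: T'_def\<close>)
qed

end

locale MPhi_version_L2 = MPhi_version +
  assumes s_le_T: "s \<le> T"
    and prog_A: "progressive A\<Phi>"
    and A_finite: "\<And>\<omega>. \<omega> \<in> Omega \<Longrightarrow> dVint_abs V 0 T (\<lambda>r. A\<Phi> r \<omega>) < \<infinity>"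
    and A_L2: "(\<integral>\<^sup>+\<omega>. set_nn_integral (interval_measure V) {s..T} (\<lambda>r. ennreal ((A\<Phi> r \<omega>)\<^sup>2)) \<partial>P s \<eta>) < \<infinity>"
    and \<Phi>_integrable: "\<And>t. s \<le> t \<Longrightarrow> integrable (P s \<eta>) (\<Phi> t)"
    and \<Phi>_L2: "\<And>t. s \<le> t \<Longrightarrow> integrable (P s \<eta>) (\<lambda>\<omega>. (\<Phi> t \<omega>)\<^sup>2)"
begin

definition \<Phi>_version where
  "\<Phi>_version t \<omega> = \<Phi> s \<eta> + dVint V s (max s t) (\<lambda>r. A\<Phi> r \<omega>) + M t \<omega>"

lemma dVint_measurable: "s \<le> t \<Longrightarrow> (\<lambda>\<omega>. dVint V s t (\<lambda>r. A\<Phi> r \<omega>)) \<in> borel_measurable Q"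
  using measurable_dVint_progressive(1)[OF V prog_A sets_P s_nonneg] by (rule measurable_completion)

lemma dVint_abs_measurable: "(\<lambda>\<omega>. dVint_abs V s T (\<lambda>r. A\<Phi> r \<omega>)) \<in> borel_measurable Q"
  using measurable_dVint_progressive(2)[OF V prog_A sets_P s_nonneg s_le_T] by (rule measurable_completion)

lemma dVint_abs_L2: "(\<integral>\<^sup>+\<omega>. (dVint_abs V s T (\<lambda>r. A\<Phi> r \<omega>))\<^sup>2 \<partial>Q) < \<infinity>"
proof -
  have [measurable]: "(\<lambda>\<omega>. dVint_abs V s T (\<lambda>r. A\<Phi> r \<omega>)) \<in> borel_measurable (P s \<eta>)"
    by (rule measurable_dVint_progressive(2)[OF V prog_A sets_P s_nonneg s_le_T])
  have "(\<lambda>\<omega>. (dVint_abs V s T (\<lambda>r. A\<Phi> r \<omega>))\<^sup>2) \<in> borel_measurable (P s \<eta>)" by measurable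
  then show ?thesis
    using nn_integral_dVint_abs_power2_finite[OF V prog_A sets_P s_nonneg s_le_T A_L2]
    by (simp add: nn_integral_completion)
qed

lemma \<Phi>_measurable: "s \<le> t \<Longrightarrow> \<Phi> t \<in> borel_measurable Q"
  using \<Phi>_integrable by (intro measurable_completion borel_measurable_integrable)

lemma \<Phi>_L2_completion:
  assumes "s \<le> t"
  shows "(\<integral>\<^sup>+\<omega>. (ennreal \<bar>\<Phi> t \<omega>\<bar>)\<^sup>2 \<partial>Q) < \<infinity>"
proof -
  have "integrable Q (\<lambda>\<omega>. (\<Phi> t \<omega>)\<^sup>2)"
    using \<Phi>_L2[OF assms] by (simp add: integrable_completion borel_measurable_integrable)
  then show ?thesis
    using integrable_power2_iff_nn_integral[OF \<Phi>_measurable[OF assms]] by simp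
qed

lemma M_eq_compensated_Phi:
  assumes "s \<le> t"
  shows "AE \<omega> in Q. M t \<omega> = \<Phi> t \<omega> - \<Phi> s \<omega> - dVint V s t (\<lambda>r. A\<Phi> r \<omega>)"
  using M_increment[OF order_refl assms] AE_space
  by eventually_elim (use s_nonneg in \<open>simp add: MPhi_def M_eq_0\<close>)

lemma M_square_integrable:
  assumes t: "s \<le> t" "t \<le> T"
  shows "integrable Q (\<lambda>\<omega>. (M t \<omega>)\<^sup>2)"
proof -
  let ?J = "\<lambda>\<omega>. dVint_abs V s T (\<lambda>r. A\<Phi> r \<omega>)"
  have [measurable]: "\<Phi> t \<in> borel_measurable Q" "\<Phi> s \<in> borel_measurable Q" "?J \<in> borel_measurable Q"
    using t by (auto intro: \<Phi>_measurable dVint_abs_measurable)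
  have "(\<integral>\<^sup>+\<omega>. (ennreal \<bar>\<Phi> t \<omega>\<bar> + ennreal \<bar>\<Phi> s \<omega>\<bar> + ?J \<omega>)\<^sup>2 \<partial>Q) < \<infinity>"
    using t by (intro nn_integral_power2_add_finite \<Phi>_L2_completion dVint_abs_L2) auto
  moreover have "AE \<omega> in Q. ennreal \<bar>M t \<omega>\<bar> \<le> ennreal \<bar>\<Phi> t \<omega>\<bar> + ennreal \<bar>\<Phi> s \<omega>\<bar> + ?J \<omega>"
    using M_eq_compensated_Phi[OF t(1)]
  proof eventually_elim
    case (elim \<omega>)
    then show ?case
      using ennreal_abs_diff3_le abs_dVint_le_dVint_abs[OF t(2)] by (metis add_left_mono order_trans)
  qed
  ultimately have "(\<integral>\<^sup>+\<omega>. (ennreal \<bar>M t \<omega>\<bar>)\<^sup>2 \<partial>Q) < \<infinity>"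
    by (elim le_less_trans[rotated] nn_integral_mono_AE[OF eventually_mono]) (auto intro: power_mono)
  then show ?thesis
    using M_measurable t s_nonneg by (simp add: integrable_power2_iff_nn_integral)
qed

lemma sup_M_L2: "(\<integral>\<^sup>+\<omega>. (SUP t\<in>{s..T}. ennreal \<bar>M t \<omega>\<bar>)\<^sup>2 \<partial>Q) < \<infinity>"
proof -
  have mart: "(\<integral>\<omega>. indicator B \<omega> * M T \<omega> \<partial>Q) = (\<integral>\<omega>. indicator B \<omega> * M t \<omega> \<partial>Q)"
    if "s \<le> t" "t \<le> T" "B \<in> sets (Fcompl (P s \<eta>) t)" for t B
    using M_cadlag_martingale that s_nonneg
    unfolding cadlag_martingale_def set_lebesgue_integral_def by simp
  have "(\<integral>\<^sup>+\<omega>. (SUP t\<in>{s..T}. ennreal \<bar>M t \<omega>\<bar>)\<^sup>2 \<partial>Q) \<le> 4 * (\<integral>\<^sup>+\<omega>. ennreal ((M T \<omega>)\<^sup>2) \<partial>Q)"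
  proof (rule doob_L2_inequality_right_continuous[OF _ s_le_T, where G="Fcompl (P s \<eta>)"])
    show "sigma_finite_measure Q"
      using prob_space.prob_space_completion[OF prob] by (rule prob_space_imp_sigma_finite)
    show "sets (Fcompl (P s \<eta>) t) \<subseteq> sets Q" for t
      by (rule sets_Fcompl_subset_completion[OF sets_P])
    show "space (Fcompl (P s \<eta>) t) = space Q" for t
      by (simp add: space_Fcompl)
    show "M t \<in> borel_measurable (Fcompl (P s \<eta>) t)" "integrable Q (M t)" if "s \<le> t" for t
      using M_cadlag_martingale that s_nonneg unfolding cadlag_martingale_def by auto
  qed (use sets_Fcompl_mono mart M_square_integrable M_right_continuous s_nonneg in auto)
  also have "\<dots> < \<infinity>"
    using M_square_integrable[OF s_le_T order_refl] by (simp add: integrable_iff_bounded ennreal_mult_less_top)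
  finally show ?thesis .
qed

lemma A_set_integrable:
  assumes "\<omega> \<in> Omega"
  shows "set_integrable (interval_measure V) {s..T} (\<lambda>r. A\<Phi> r \<omega>)"
proof -
  have "(\<integral>\<^sup>+r. ennreal (norm (indicator {s..T} r * A\<Phi> r \<omega>)) \<partial>interval_measure V) \<le> dVint_abs V 0 T (\<lambda>r. A\<Phi> r \<omega>)"
    unfolding dVint_abs_def using s_nonneg by (intro nn_integral_mono) (auto simp: indicator_def)
  then show ?thesis
    using A_finite[OF assms] measurable_dVint_progressive(4)[OF V prog_A sets_P s_nonneg s_le_T, of \<omega>] assms
    unfolding set_integrable_def by (simp add: integrable_iff_bounded le_less_trans)
qed

lemma \<Phi>_version_right_continuous:
  assumes \<omega>: "\<omega> \<in> Omega" and t: "s \<le> t" "t < T"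
  shows "((\<lambda>u. \<Phi>_version u \<omega>) \<longlongrightarrow> \<Phi>_version t \<omega>) (at_right t)"
proof -
  have "\<Phi>_version t \<omega> = \<Phi> s \<eta> + dVint V s t (\<lambda>r. A\<Phi> r \<omega>) + M t \<omega>"
    using t by (simp add: \<Phi>_version_def)
  moreover have "((\<lambda>u. \<Phi> s \<eta> + dVint V s u (\<lambda>r. A\<Phi> r \<omega>) + M u \<omega>)
      \<longlongrightarrow> \<Phi> s \<eta> + dVint V s t (\<lambda>r. A\<Phi> r \<omega>) + M t \<omega>) (at_right t)"
    using t s_nonneg
    by (intro tendsto_add tendsto_const dVint_right_continuous[OF A_set_integrable[OF \<omega>]]
        M_right_continuous[OF \<omega>]) auto
  ultimately have "((\<lambda>u. \<Phi> s \<eta> + dVint V s u (\<lambda>r. A\<Phi> r \<omega>) + M u \<omega>) \<longlongrightarrow> \<Phi>_version t \<omega>) (at_right t)"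
    by simp
  moreover have "\<forall>\<^sub>F u in at_right t. \<Phi> s \<eta> + dVint V s u (\<lambda>r. A\<Phi> r \<omega>) + M u \<omega> = \<Phi>_version u \<omega>"
    using eventually_at_right_less[of t]
    by eventually_elim (use t in \<open>simp add: \<Phi>_version_def max_def\<close>)
  ultimately show ?thesis
    by (rule tendsto_cong[THEN iffD1, rotated])
qed

lemma \<Phi>_version_measurable:
  assumes "s \<le> t"
  shows "\<Phi>_version t \<in> borel_measurable Q"
proof -
  have [measurable]: "M t \<in> borel_measurable Q" "(\<lambda>\<omega>. dVint V s t (\<lambda>r. A\<Phi> r \<omega>)) \<in> borel_measurable Q"
    using assms s_nonneg by (auto intro: M_measurable dVint_measurable)
  show ?thesis
    unfolding \<Phi>_version_def using assms by (simp add: max_def)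
qed

lemma sup_\<Phi>_version_measurable: "(\<lambda>\<omega>. SUP t\<in>{s..T}. ennreal \<bar>\<Phi>_version t \<omega>\<bar>) \<in> borel_measurable Q"
  using s_le_T \<Phi>_version_measurable \<Phi>_version_right_continuous
  by (intro borel_measurable_SUP_Icc_right_continuous) auto

lemma sup_\<Phi>_version_L2: "(\<integral>\<^sup>+\<omega>. (SUP t\<in>{s..T}. ennreal \<bar>\<Phi>_version t \<omega>\<bar>)\<^sup>2 \<partial>Q) < \<infinity>"
proof -
  let ?J = "\<lambda>\<omega>. dVint_abs V s T (\<lambda>r. A\<Phi> r \<omega>)" and ?S = "\<lambda>\<omega>. SUP t\<in>{s..T}. ennreal \<bar>M t \<omega>\<bar>"
  have bound: "(SUP t\<in>{s..T}. ennreal \<bar>\<Phi>_version t \<omega>\<bar>) \<le> ennreal \<bar>\<Phi> s \<eta>\<bar> + ?J \<omega> + ?S \<omega>" for \<omega>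
  proof (rule SUP_least)
    fix t assume t: "t \<in> {s..T}"
    have "ennreal \<bar>\<Phi>_version t \<omega>\<bar> \<le> ennreal \<bar>\<Phi> s \<eta>\<bar> + ennreal \<bar>dVint V s t (\<lambda>r. A\<Phi> r \<omega>)\<bar> + ennreal \<bar>M t \<omega>\<bar>"
      using t ennreal_abs_diff3_le[of "\<Phi> s \<eta>" "- dVint V s t (\<lambda>r. A\<Phi> r \<omega>)" "- M t \<omega>"]
      by (simp add: \<Phi>_version_def max_def)
    also have "\<dots> \<le> ennreal \<bar>\<Phi> s \<eta>\<bar> + ?J \<omega> + ?S \<omega>"
      using t by (intro add_mono order_refl abs_dVint_le_dVint_abs SUP_upper) auto
    finally show "ennreal \<bar>\<Phi>_version t \<omega>\<bar> \<le> ennreal \<bar>\<Phi> s \<eta>\<bar> + ?J \<omega> + ?S \<omega>" .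
  qed
  have [measurable]: "?J \<in> borel_measurable Q" "?S \<in> borel_measurable Q"
    using s_le_T s_nonneg M_measurable M_right_continuous
    by (auto intro: dVint_abs_measurable borel_measurable_SUP_Icc_right_continuous)
  have "(\<integral>\<^sup>+\<omega>. (ennreal \<bar>\<Phi> s \<eta>\<bar>)\<^sup>2 \<partial>Q) < \<infinity>"
    using prob_space.emeasure_space_1[OF prob_space.prob_space_completion[OF prob]]
    by (simp add: ennreal_power)
  then have "(\<integral>\<^sup>+\<omega>. (ennreal \<bar>\<Phi> s \<eta>\<bar> + ?J \<omega> + ?S \<omega>)\<^sup>2 \<partial>Q) < \<infinity>"
    by (intro nn_integral_power2_add_finite dVint_abs_L2 sup_M_L2) auto
  moreover have "(\<integral>\<^sup>+\<omega>. (SUP t\<in>{s..T}. ennreal \<bar>\<Phi>_version t \<omega>\<bar>)\<^sup>2 \<partial>Q)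
      \<le> (\<integral>\<^sup>+\<omega>. (ennreal \<bar>\<Phi> s \<eta>\<bar> + ?J \<omega> + ?S \<omega>)\<^sup>2 \<partial>Q)"
    using bound by (intro nn_integral_mono power_mono) auto
  ultimately show ?thesis by (rule le_less_trans[rotated])
qed

end

lemma MPhi_versionI:
  assumes "markov_family P" "integrator T V" "weak_generator P T V D A" "\<Phi> \<in> D"
    and "0 \<le> s" "\<eta> \<in> Omega" "MAF_version P s \<eta> (MPhi V \<Phi> (A \<Phi>)) M"
  shows "MPhi_version P T V \<Phi> (A \<Phi>) s \<eta> M"
  by (rule MPhi_version.intro[OF markov_familyD[OF assms(1,5,6)] assms(2,5)
        weak_generatorD(4,5)[OF assms(3,4)] assms(7)])

lemma MPhi_version_L2I:
  assumes P: "markov_family P" and V: "integrator T V" and DA: "weak_generator P T V D A"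
    and Phi: "\<Phi> \<in> D" and Phi2: "(\<lambda>t \<omega>. (\<Phi> t \<omega>)\<^sup>2) \<in> D" and APhi: "A \<Phi> \<in> L2_uni P T V"
    and s: "s \<in> {0..T}" and \<eta>: "\<eta> \<in> Omega" and M: "MAF_version P s \<eta> (MPhi V \<Phi> (A \<Phi>)) M"
  shows "MPhi_version_L2 P T V \<Phi> (A \<Phi>) s \<eta> M"
proof (rule MPhi_version_L2.intro[OF MPhi_versionI[OF P V DA Phi _ \<eta> M]])
  note \<Phi> = weak_generatorD[OF DA Phi]
  show "0 \<le> s" using s by simp
  show "MPhi_version_L2_axioms P T V \<Phi> (A \<Phi>) s \<eta>"
  proof (rule MPhi_version_L2_axioms.intro)
    show "dVint_abs V 0 T (\<lambda>r. A \<Phi> r \<omega>) < \<infinity>" if "\<omega> \<in> Omega" for \<omega>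
      using \<Phi>(2)[OF that] s by simp
    show "(\<integral>\<^sup>+\<omega>. set_nn_integral (interval_measure V) {s..T} (\<lambda>r. ennreal ((A \<Phi> r \<omega>)\<^sup>2)) \<partial>P s \<eta>) < \<infinity>"
      using APhi s \<eta> unfolding L2_uni_def by blast
  qed (use s \<eta> \<Phi>(1,3) weak_generatorD(3)[OF DA Phi2] in auto)
qed

theorem lemma4p15:
  fixes P :: "real \<Rightarrow> (real \<Rightarrow> 'e::polish_space) \<Rightarrow> (real \<Rightarrow> 'e) measure"
    and T :: real and V :: "real \<Rightarrow> real"
    and D :: "(real \<Rightarrow> (real \<Rightarrow> 'e) \<Rightarrow> real) set"
    and A :: "(real \<Rightarrow> (real \<Rightarrow> 'e) \<Rightarrow> real) \<Rightarrow> (real \<Rightarrow> (real \<Rightarrow> 'e) \<Rightarrow> real)"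
    and \<Phi> :: "real \<Rightarrow> (real \<Rightarrow> 'e) \<Rightarrow> real"
  assumes P: "markov_family P"
    and V: "integrator T V"
    and DA: "weak_generator P T V D A"
    and MAF: "\<forall>\<Psi>\<in>D. is_MAF P (MPhi V \<Psi> (A \<Psi>))"
    and Phi: "\<Phi> \<in> D"
    and Phi2: "(\<lambda>t \<omega>. (\<Phi> t \<omega>)\<^sup>2) \<in> D"
    and APhi: "A \<Phi> \<in> L2_uni P T V"
  shows "square_integrable_MAF P (MPhi V \<Phi> (A \<Phi>)) \<and>
    (\<forall>s\<in>{0..T}. \<forall>\<eta>\<in>Omega. \<forall>Ms. MAF_version P s \<eta> (MPhi V \<Phi> (A \<Phi>)) Ms \<longrightarrow>
       (let \<Phi>s = (\<lambda>t \<omega>. \<Phi> s \<eta> + dVint V s (max s t) (\<lambda>r. A \<Phi> r \<omega>) + Ms t \<omega>);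
            S = (\<lambda>\<omega>. \<Squnion>t\<in>{s..T}. ennreal \<bar>\<Phi>s t \<omega>\<bar>)
        in S \<in> borel_measurable (completion (P s \<eta>)) \<and>
           (\<integral>\<^sup>+ \<omega>. (S \<omega>)\<^sup>2 \<partial>completion (P s \<eta>)) < \<infinity>))"
proof -
  have "square_integrable_MAF P (MPhi V \<Phi> (A \<Phi>))"
    unfolding square_integrable_MAF_def
  proof (intro conjI allI impI ballI)
    show "is_MAF P (MPhi V \<Phi> (A \<Phi>))" using MAF Phi by blast
    fix s \<eta> M assume s: "0 \<le> s" and \<eta>: "\<eta> \<in> Omega" and M: "MAF_version P s \<eta> (MPhi V \<Phi> (A \<Phi>)) M"
    interpret MPhi_version P T V \<Phi> "A \<Phi>" s \<eta> M
      by (rule MPhi_versionI[OF P V DA Phi s \<eta> M])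
    show "square_integrable_proc (completion (P s \<eta>)) M"
    proof (rule square_integrable_M)
      assume "s \<le> T"
      with s interpret MPhi_version_L2 P T V \<Phi> "A \<Phi>" s \<eta> M
        by (intro MPhi_version_L2I[OF P V DA Phi Phi2 APhi _ \<eta> M]) simp
      show "(\<integral>\<^sup>+\<omega>. (SUP t\<in>{s..T}. ennreal \<bar>M t \<omega>\<bar>)\<^sup>2 \<partial>completion (P s \<eta>)) < \<infinity>"
        by (rule sup_M_L2)
    qed
  qed
  moreover have "S \<in> borel_measurable (completion (P s \<eta>)) \<and> (\<integral>\<^sup>+ \<omega>. (S \<omega>)\<^sup>2 \<partial>completion (P s \<eta>)) < \<infinity>"
    if "s \<in> {0..T}" "\<eta> \<in> Omega" "MAF_version P s \<eta> (MPhi V \<Phi> (A \<Phi>)) Ms"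
      and "S = (\<lambda>\<omega>. \<Squnion>t\<in>{s..T}. ennreal \<bar>\<Phi> s \<eta> + dVint V s (max s t) (\<lambda>r. A \<Phi> r \<omega>) + Ms t \<omega>\<bar>)"
    for s \<eta> Ms S
  proof -
    interpret MPhi_version_L2 P T V \<Phi> "A \<Phi>" s \<eta> Ms
      by (rule MPhi_version_L2I[OF P V DA Phi Phi2 APhi that(1-3)])
    show ?thesis
      using sup_\<Phi>_version_measurable sup_\<Phi>_version_L2 that(4) by (simp add: \<Phi>_version_def)
  qed
  ultimately show ?thesis by (simp add: Let_def)
qed

end
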